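(* Let $\mathcal{N}_{\mathrm{Cl}}$ be the $1\to N$ cloning channel and $0\le\lambda\le1$. Then there exists $\mu\in[0,1/2]$ such that the admissible state from the ensemble \[ \tfrac12|0\rangle\langle0|^X\otimes\psi_0^{AA'}+\tfrac12|1\rangle\langle1|^X\otimes\psi_1^{AA'}, \] where $\psi_0,\psi_1$ are pure with $\mathrm{Tr}_A\psi_0=\mu|0\rangle\langle0|+(1-\mu)|1\rangle\langle1|$ and $\mathrm{Tr}_A\psi_1=(1-\mu)|0\rangle\langle0|+\mu|1\rangle\langle1|$, attains $g_\lambda(\mathcal{N}_{\mathrm{Cl}})$. Hence such ensembles parametrize all points on the CE trade-off curve of $\mathcal{N}_{\mathrm{Cl}}$.
   Context: The $1\to N$ cloning channel has qubit input $A'$ with basis $\{|0\rangle,|1\rangle\}$, output $B$ of dimension $N+1$ with orthonormal basis $\{|j\rangle^B\}_{j=0}^N$, environment $E$ of dimension $N$ with orthonormal basis $\{|i\rangle^E\}_{i=0}^{N-1}$, and isometric extension $U=\frac{1}{\sqrt{\Delta_N}}\sum_{i=0}^{N-1}\big(\sqrt{N-i}\,|i\rangle^B\langle0|^{A'}+\sqrt{i+1}\,|i+1\rangle^B\langle1|^{A'}\big)\otimes|i\rangle^E$, $\Delta_N=N(N+1)/2$. An admissible state for a channel with isometric extension $U^{A'\to BE}$ is $\sum_x p_X(x)|x\rangle\langle x|^X\otimes U(\phi_x^{AA'})U^\dagger$ ($X$ finite, $A$ finite-dimensional, $\phi_x$ pure). Entropies base 2; $g_\lambda(\mathcal{N})=\sup_\rho[I(AX;B)_\rho-\lambda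 H(A|X)_\rho]$ over admissible states. *)

theory Defs
  imports "Jordan_Normal_Form.Char_Poly" "HOL-Computational_Algebra.Polynomial"
begin

text \<open>Tensor products use the ordering: index (i, k) of H_1 (x) H_2 with
  dim H_2 = d2 is encoded as i * d2 + k (Kronecker product convention).\<close>

definition kron :: "complex mat \<Rightarrow> complex mat \<Rightarrow> complex mat" where
  "kron A B = mat (dim_row A * dim_row B) (dim_col A * dim_col B)
     (\<lambda>(i, j). A $$ (i div dim_row B, j div dim_col B) * B $$ (i mod dim_row B, j mod dim_col B))"

definition adj :: "complex mat \<Rightarrow> complex mat" where
  "adj A = mat (dim_col A) (dim_row A) (\<lambda>(i, j). cnj (A $$ (j, i)))"

definition proj :: "complex vec \<Rightarrow> complex mat" where
  "proj v = mat (dim_vec v) (dim_vec v) (\<lambda>(i, j). v $ i * cnj (v $ j))"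

definition is_unit_vector :: "complex vec \<Rightarrow> bool" where
  "is_unit_vector v \<longleftrightarrow> (\<Sum>i<dim_vec v. (cmod (v $ i))\<^sup>2) = 1"

definition ketbra :: "nat \<Rightarrow> nat \<Rightarrow> complex mat" where
  "ketbra n x = mat n n (\<lambda>(i, j). if i = x \<and> j = x then 1 else 0)"

definition ptrace_right :: "nat \<Rightarrow> nat \<Rightarrow> complex mat \<Rightarrow> complex mat" where
  "ptrace_right d1 d2 \<rho> = mat d1 d1 (\<lambda>(i, j). \<Sum>k<d2. \<rho> $$ (i * d2 + k, j * d2 + k))"

definition ptrace_left :: "nat \<Rightarrow> nat \<Rightarrow> complex mat \<Rightarrow> complex mat" where
  "ptrace_left d1 d2 \<rho> = mat d2 d2 (\<lambda>(i, j). \<Sum>k<d1. \<rho> $$ (k * d2 + i, k * d2 + j))"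

definition vn_entropy :: "complex mat \<Rightarrow> real" where
  "vn_entropy \<rho> = (\<Sum>e \<in># proots (char_poly \<rho>).
      (if Re e > 0 then - Re e * log 2 (Re e) else 0))"

definition Delta :: "nat \<Rightarrow> real" where
  "Delta N = real N * (real N + 1) / 2"

text \<open>Isometry U : A' (dim 2) -> B (x) E, dim B = N+1, dim E = N;
  entry at row b * N + e (|b>^B (x) |e>^E), column a (<a|^A').\<close>
definition clone_iso :: "nat \<Rightarrow> complex mat" where
  "clone_iso N = mat ((N + 1) * N) 2 (\<lambda>(r, a).
     (let b = r div N; e = r mod N in
      if a = 0 then (if b = e then complex_of_real (sqrt (real (N - e) / Delta N)) else 0)
      else (if b = e + 1 then complex_of_real (sqrt (real (e + 1) / Delta N)) else 0)))"

text \<open>Admissible state on X (x) A (x) B (x) E from the ensemble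
  {p x, phi x}, x < nX, where phi x is a vector on A (x) A' (dim A = dA):
  sum_x p x |x><x| (x) (1_A (x) U) phi_x (1_A (x) U)^dagger, written entrywise.\<close>
definition adm_state_m :: "nat \<Rightarrow> nat \<Rightarrow> (nat \<Rightarrow> real) \<Rightarrow> nat \<Rightarrow> (nat \<Rightarrow> complex vec) \<Rightarrow> complex mat" where
  "adm_state_m N nX p dA \<phi> =
     (let V = kron (1\<^sub>m dA) (clone_iso N);
          d = nX * (dA * ((N + 1) * N)) in
      mat d d (\<lambda>(i, j). \<Sum>x<nX. complex_of_real (p x) *
          (kron (ketbra nX x) (V * proj (\<phi> x) * adj V)) $$ (i, j)))"

definition admissible_ensemble :: "nat \<Rightarrow> (nat \<Rightarrow> real) \<Rightarrow> nat \<Rightarrow> (nat \<Rightarrow> complex vec) \<Rightarrow> bool" where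
  "admissible_ensemble nX p dA \<phi> \<longleftrightarrow>
     nX \<ge> 1 \<and> dA \<ge> 1 \<and> (\<forall>x<nX. p x \<ge> 0) \<and> (\<Sum>x<nX. p x) = 1 \<and>
     (\<forall>x<nX. dim_vec (\<phi> x) = dA * 2 \<and> is_unit_vector (\<phi> x))"

text \<open>I(AX;B) - lambda H(A|X) evaluated on the admissible state
  (systems ordered X, A, B, E with dimensions nX, dA, N+1, N).\<close>
definition ce_objective :: "nat \<Rightarrow> real \<Rightarrow> nat \<Rightarrow> (nat \<Rightarrow> real) \<Rightarrow> nat \<Rightarrow> (nat \<Rightarrow> complex vec) \<Rightarrow> real" where
  "ce_objective N lam nX p dA \<phi> =
     (let \<rho> = adm_state_m N nX p dA \<phi>;
          dB = N + 1; dE = N;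
          \<rho>XAB = ptrace_right (nX * dA * dB) dE \<rho>;
          \<rho>XA = ptrace_right (nX * dA) (dB * dE) \<rho>;
          \<rho>B = ptrace_left (nX * dA) dB \<rho>XAB;
          \<rho>X = ptrace_right nX (dA * (dB * dE)) \<rho>;
          H_AX = vn_entropy \<rho>XA;
          H_B = vn_entropy \<rho>B;
          H_AXB = vn_entropy \<rho>XAB;
          H_X = vn_entropy \<rho>X;
          I_AX_B = H_AX + H_B - H_AXB;
          H_A_given_X = H_AX - H_X
      in I_AX_B - lam * H_A_given_X)"

definition g_lambda :: "nat \<Rightarrow> real \<Rightarrow> real" where
  "g_lambda N lam = Sup {ce_objective N lam nX p dA \<phi> | nX p dA \<phi>. admissible_ensemble nX p dA \<phi>}"

definition diag2 :: "real \<Rightarrow> real \<Rightarrow> complex mat" where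
  "diag2 a b = mat 2 2 (\<lambda>(i, j). if i = j then (if i = 0 then complex_of_real a else complex_of_real b) else 0)"

end

theory Submission
  imports Defs
begin

(* For an admissible ensemble {p_x, phi_x}, let r_x in [0,1] be the Bloch
   length of the qubit marginal rho_x = Tr_A phi_x and rbar that of the average sum p_x rho_x.
   All four entropies in the objective are computed exactly: block-diagonal states
   contribute sums of block entropies, a pure state has equal entropies on both sides of a
   cut (Sylvester's identity char_poly (A B) vs char_poly (B A)), and the marginals of
   U rho U^dagger on B and on E are "spin" tridiagonal matrices whose spectra we determine
   explicitly (eigenvectors from a polynomial model of the angular-momentum algebra).
   The result is the closed form
       objective = H_out(rbar) + sum_x p_x * ce_gain(r_x),
   with H_out(r) <= log (N+1) (Gibbs) and equality at r = 0.  Hence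
   objective <= log (N+1) + max_{[0,1]} ce_gain, and the flagged ensemble with
   mu = (1 - r_max)/2, where r_max maximises the continuous function ce_gain, has rbar = 0 and
   r_0 = r_1 = r_max, so it attains this bound, which is therefore g_lambda. *)

lemma index_pair_lt: "q < m \<Longrightarrow> r < n \<Longrightarrow> q * n + r < m * (n::nat)"
proof -
  assume "q < m" "r < n"
  hence "q * n + r < q * n + n" by simp
  also have "\<dots> = Suc q * n" by simp
  also have "\<dots> \<le> m * n" using \<open>q < m\<close> by (intro mult_le_mono1) simp
  finally show ?thesis .
qed

lemma index_pair_div[simp]: "r < n \<Longrightarrow> (q * n + r) div n = (q::nat)" by simp

lemma index_pair_mod[simp]: "r < n \<Longrightarrow> (q * n + r) mod n = (r::nat)" by simp

lemma sum_index_pair: "(\<Sum>k<m*n. f k) = (\<Sum>q<m. \<Sum>r<n. f (q*n+r :: nat))"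
proof (induct m)
  case (Suc m)
  have "{..<Suc m * n} = {..<m*n} \<union> {m*n..<m*n+n}" by auto
  hence "(\<Sum>k<Suc m*n. f k) = (\<Sum>k<m*n. f k) + (\<Sum>k\<in>{m*n..<m*n+n}. f k)"
    by (simp add: sum.union_disjoint ivl_disj_int)
  also have "(\<Sum>k\<in>{m*n..<m*n+n}. f k) = (\<Sum>r<n. f (m*n+r))"
    by (rule sum.reindex_bij_witness[of _ "\<lambda>r. m*n+r" "\<lambda>k. k - m*n"], auto)
  finally show ?case using Suc by simp
qed simp

lemma div_lt_of_lt_mult: "i < n * d \<Longrightarrow> i div d < (n::nat)"
  by (simp add: less_mult_imp_div_less)

lemma index_regroup_div_mod: assumes "k < d2" "0 < d1"
  shows "(i*d2+k) div (d1*d2) = i div d1" "(i*d2+k) mod (d1*d2) = (i mod d1)*d2 + (k::nat)"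
proof -
  have im: "i mod d1 < d1" using assms by simp
  have lt: "(i mod d1)*d2 + k < d1*d2" using index_pair_lt[OF im assms(1)] .
  have eq: "i*d2+k = (i div d1)*(d1*d2) + ((i mod d1)*d2 + k)"
  proof -
    have "i*d2 = (i div d1 * d1 + i mod d1) * d2" by (simp only: div_mult_mod_eq)
    also have "\<dots> = (i div d1)*(d1*d2) + (i mod d1)*d2" by (simp only: distrib_right mult.assoc)
    finally have h: "i*d2 = (i div d1)*(d1*d2) + (i mod d1)*d2" .
    show ?thesis by (simp only: h add.assoc)
  qed
  show "(i*d2+k) div (d1*d2) = i div d1" unfolding eq using lt by simp
  show "(i*d2+k) mod (d1*d2) = (i mod d1)*d2 + k" unfolding eq using lt by simp
qed

lemma index_regroup: "(a*(N+1)+b)*N+e = a*((N+1)*N) + (b*N+(e::nat))"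
  by (simp add: algebra_simps)

lemma kron_index:
  assumes "i < dim_row A * dim_row B" "j < dim_col A * dim_col B"
  shows "kron A B $$ (i,j) = A $$ (i div dim_row B, j div dim_col B) * B $$ (i mod dim_row B, j mod dim_col B)"
  using assms by (simp add: kron_def)

text \<open>Action of 1 (x) U on a vector: only the diagonal block of the identity contributes.\<close>

lemma kron1_mult_vec:
  assumes U: "U \<in> carrier_mat R C" and phi: "dim_vec phi = d * C" and a: "a < d" and r: "r < R"
  shows "(kron (1\<^sub>m d) U *\<^sub>v phi) $ (a*R+r) = (\<Sum>i<C. U $$ (r,i) * phi $ (a*C+i))"
proof -
  have dims: "dim_row (kron (1\<^sub>m d) U) = d * R" "dim_col (kron (1\<^sub>m d) U) = d * C"
    using U by (auto simp: kron_def)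
  have k: "a*R+r < d*R" using index_pair_lt[OF a r] .
  have "(kron (1\<^sub>m d) U *\<^sub>v phi) $ (a*R+r) = (\<Sum>j<d*C. kron (1\<^sub>m d) U $$ (a*R+r, j) * phi $ j)"
    using k dims phi by (simp add: scalar_prod_def lessThan_atLeast0)
  also have "\<dots> = (\<Sum>q<d. \<Sum>i<C. kron (1\<^sub>m d) U $$ (a*R+r, q*C+i) * phi $ (q*C+i))"
    by (rule sum_index_pair)
  also have "\<dots> = (\<Sum>q<d. \<Sum>i<C. (if q = a then U $$ (r,i) * phi $ (a*C+i) else 0))"
    using U k r a by (intro sum.cong refl, subst kron_index, auto simp: index_pair_lt)
  also have "\<dots> = (\<Sum>i<C. U $$ (r,i) * phi $ (a*C+i))"
    using a by (subst sum.swap, simp)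
  finally show ?thesis .
qed

lemma proj_index: "i < dim_vec v \<Longrightarrow> j < dim_vec v \<Longrightarrow> proj v $$ (i,j) = v $ i * cnj (v $ j)"
  by (simp add: proj_def)

lemma proj_conj:
  assumes V: "V \<in> carrier_mat r c" and phi: "dim_vec phi = c"
  shows "V * proj phi * adj V = proj (V *\<^sub>v phi)"
proof (rule eq_matI)
  fix i j assume i: "i < dim_row (proj (V *\<^sub>v phi))" and j: "j < dim_col (proj (V *\<^sub>v phi))"
  have ir: "i < r" "j < r" using i j V by (auto simp: proj_def)
  have "(V * proj phi * adj V) $$ (i,j) = (\<Sum>l<c. (\<Sum>k<c. V $$ (i,k) * (phi $ k * cnj (phi $ l))) * cnj (V $$ (j,l)))"
    using ir V phi by (simp add: proj_def adj_def scalar_prod_def lessThan_atLeast0)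
  also have "\<dots> = (\<Sum>k<c. V $$ (i,k) * phi $ k) * cnj (\<Sum>l<c. V $$ (j,l) * phi $ l)"
    by (simp add: sum_distrib_left sum_distrib_right algebra_simps)
  also have "\<dots> = proj (V *\<^sub>v phi) $$ (i,j)"
    using ir V phi by (simp add: proj_def scalar_prod_def lessThan_atLeast0)
  finally show "(V * proj phi * adj V) $$ (i,j) = proj (V *\<^sub>v phi) $$ (i,j)" .
qed (insert V phi, auto simp: proj_def adj_def)

section \<open>Von Neumann entropy of matrices\<close>

definition eta :: "real \<Rightarrow> real" where
  "eta t = (if t > 0 then - t * log 2 t else 0)"

lemma eta_0[simp]: "eta 0 = 0" by (simp add: eta_def)

lemma vn_entropy_eta: "vn_entropy A = (\<Sum>e \<in># proots (char_poly A). eta (Re e))"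
  unfolding vn_entropy_def eta_def ..

lemma eta_mult: assumes "p \<ge> 0" "t \<ge> 0" shows "eta (p*t) = p * eta t + t * eta p"
proof (cases "p = 0 \<or> t = 0")
  case True thus ?thesis by auto
next
  case False
  hence "p > 0" "t > 0" using assms by auto
  thus ?thesis by (simp add: eta_def log_mult algebra_simps)
qed

lemma char_poly_nz: assumes "A \<in> carrier_mat n n" shows "char_poly (A :: complex mat) \<noteq> 0"
  using degree_monic_char_poly[OF assms] by auto

lemma proots_monom_mult: assumes "p \<noteq> (0 :: complex poly)"
  shows "proots (monom 1 n * p) = replicate_mset n 0 + proots p"
proof -
  have "monom 1 n = ([:0,1:] :: complex poly) ^ n" by (simp add: monom_altdef)
  moreover have "proots (([:0,1:] :: complex poly) ^ n) = replicate_mset n 0"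
    by (simp add: proots_power)
  moreover have "([:0,1:] :: complex poly) ^ n \<noteq> 0" by simp
  ultimately show ?thesis using assms by (simp add: proots_mult)
qed

lemma sylvester_cp:
  fixes A B :: "'a :: idom mat"
  assumes A: "A \<in> carrier_mat m n" and B: "B \<in> carrier_mat n m"
  shows "monom 1 n * char_poly (A * B) = monom 1 m * char_poly (B * A)"
proof -
  let ?X = "[:0, 1:] :: 'a poly"
  define A' where "A' = map_mat (\<lambda>a. [:a:]) A"
  define B' where "B' = map_mat (\<lambda>a. [:a:]) B"
  have A': "A' \<in> carrier_mat m n" and B': "B' \<in> carrier_mat n m" using A B by (auto simp: A'_def B'_def)
  have cpAB: "char_poly (A * B) = det (?X \<cdot>\<^sub>m 1\<^sub>m m - A' * B')"
  proof -
    have "char_poly_matrix (A * B) = ?X \<cdot>\<^sub>m 1\<^sub>m m - A' * B'"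
      unfolding char_poly_matrix_def A'_def B'_def map_poly_mult(1)[OF A B, symmetric]
      using A B by (auto intro!: eq_matI)
    thus ?thesis by (simp add: char_poly_def)
  qed
  have cpBA: "char_poly (B * A) = det (?X \<cdot>\<^sub>m 1\<^sub>m n - B' * A')"
  proof -
    have "char_poly_matrix (B * A) = ?X \<cdot>\<^sub>m 1\<^sub>m n - B' * A'"
      unfolding char_poly_matrix_def A'_def B'_def map_poly_mult(1)[OF B A, symmetric]
      using A B by (auto intro!: eq_matI)
    thus ?thesis by (simp add: char_poly_def)
  qed
  define Q where "Q = four_block_mat (?X \<cdot>\<^sub>m 1\<^sub>m m) A' (?X \<cdot>\<^sub>m B') (?X \<cdot>\<^sub>m 1\<^sub>m n)"
  define L where "L = four_block_mat (1\<^sub>m m) (0\<^sub>m m n) (- B') (1\<^sub>m n)"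
  have Q: "Q \<in> carrier_mat (m+n) (m+n)" unfolding Q_def using A' B' by auto
  have L: "L \<in> carrier_mat (m+n) (m+n)" unfolding L_def using A' B' by auto
  have detL: "det L = 1"
    unfolding L_def by (subst det_four_block_mat_upper_right_zero[of "1\<^sub>m m" m "0\<^sub>m m n" n], insert B', auto)
  have LQ: "L * Q = four_block_mat (?X \<cdot>\<^sub>m 1\<^sub>m m) A' (0\<^sub>m n m) (?X \<cdot>\<^sub>m 1\<^sub>m n - B' * A')"
    unfolding L_def Q_def
    by (subst mult_four_block_mat[of _ m m _ n _ n _ _ m _ n], insert A' B', auto intro!: eq_matI simp: ac_simps)
  have QL: "Q * L = four_block_mat (?X \<cdot>\<^sub>m 1\<^sub>m m - A' * B') A' (0\<^sub>m n m) (?X \<cdot>\<^sub>m 1\<^sub>m n)"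
    unfolding L_def Q_def
    by (subst mult_four_block_mat[of _ m m _ n _ n _ _ m _ n], insert A' B', auto intro!: eq_matI simp: ac_simps)
  have "det (L * Q) = det Q" using det_mult[OF L Q] detL by simp
  moreover have "det (Q * L) = det Q" using det_mult[OF Q L] detL by simp
  moreover have "det (L * Q) = ?X ^ m * char_poly (B * A)"
    unfolding LQ cpBA
    by (subst det_four_block_mat_lower_left_zero[of _ m _ n], insert A' B', auto)
  moreover have "det (Q * L) = char_poly (A * B) * ?X ^ n"
    unfolding QL cpAB
    by (subst det_four_block_mat_lower_left_zero[of _ m _ n], insert A' B', auto)
  ultimately show ?thesis by (simp add: monom_altdef ac_simps)
qed

text \<open>Consequently A B and B A have the same entropy (zero eigenvalues contribute nothing).\<close>

lemma vn_entropy_comm: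
  fixes A B :: "complex mat"
  assumes A: "A \<in> carrier_mat m n" and B: "B \<in> carrier_mat n m"
  shows "vn_entropy (A * B) = vn_entropy (B * A)"
proof -
  have AB: "A * B \<in> carrier_mat m m" and BA: "B * A \<in> carrier_mat n n" using A B by auto
  have "proots (monom 1 n * char_poly (A * B)) = proots (monom 1 m * char_poly (B * A))"
    using sylvester_cp[OF A B] by simp
  hence "replicate_mset n 0 + proots (char_poly (A * B)) = replicate_mset m 0 + proots (char_poly (B * A))"
    using proots_monom_mult char_poly_nz[OF AB] char_poly_nz[OF BA] by metis
  hence "(\<Sum>e \<in># replicate_mset n 0 + proots (char_poly (A * B)). eta (Re e))
      = (\<Sum>e \<in># replicate_mset m 0 + proots (char_poly (B * A)). eta (Re e))" by simp
  thus ?thesis unfolding vn_entropy_eta by simp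
qed

lemma vn_entropy_transpose: assumes "A \<in> carrier_mat n n"
  shows "vn_entropy (transpose_mat A) = vn_entropy A"
  unfolding vn_entropy_def using char_poly_transpose_mat[OF assms] by simp

text \<open>Schmidt symmetry: the two marginals of a pure bipartite state have equal entropy.
  With u arranged as an m x n matrix M, they are M M^dagger and (M^dagger M)^T.\<close>

lemma vn_entropy_ptrace_swap:
  assumes u: "dim_vec u = m * n"
  shows "vn_entropy (ptrace_right m n (proj u)) = vn_entropy (ptrace_left m n (proj u))"
proof -
  define Am where "Am = mat m n (\<lambda>(i,k). u $ (i*n+k))"
  have Am: "Am \<in> carrier_mat m n" by (simp add: Am_def)
  have adjAm: "adj Am \<in> carrier_mat n m" by (simp add: Am_def adj_def)
  have 1: "ptrace_right m n (proj u) = Am * adj Am"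
    by (rule eq_matI, auto simp: ptrace_right_def Am_def adj_def proj_def scalar_prod_def u index_pair_lt
        intro!: sum.cong)
  have 2: "ptrace_left m n (proj u) = transpose_mat (adj Am * Am)"
    by (rule eq_matI, auto simp: ptrace_left_def Am_def adj_def proj_def scalar_prod_def u index_pair_lt
        intro!: sum.cong)
  show ?thesis unfolding 1 2
    by (subst vn_entropy_transpose[of _ n], insert Am adjAm, auto intro!: vn_entropy_comm)
qed

text \<open>Partial traces commute with scaling by a probability, which may be absorbed into
  the vector as a factor sqrt p; so Schmidt symmetry also holds for subnormalised states.\<close>

lemma ptrace_right_scaled:
  assumes u: "dim_vec u = m * n" and p: "p \<ge> 0"
  shows "complex_of_real p \<cdot>\<^sub>m ptrace_right m n (proj u) = ptrace_right m n (proj (complex_of_real (sqrt p) \<cdot>\<^sub>v u))"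
proof (rule eq_matI)
  fix i j assume "i < dim_row (ptrace_right m n (proj (complex_of_real (sqrt p) \<cdot>\<^sub>v u)))"
    "j < dim_col (ptrace_right m n (proj (complex_of_real (sqrt p) \<cdot>\<^sub>v u)))"
  hence i: "i < m" "j < m" by (auto simp: ptrace_right_def)
  have lt: "i*n+k < m*n" "j*n+k < m*n" if "k < n" for k using index_pair_lt[OF i(1) that] index_pair_lt[OF i(2) that] by auto
  have sp: "complex_of_real (sqrt p) * complex_of_real (sqrt p) = complex_of_real p"
    using p by (simp flip: of_real_mult)
  show "(complex_of_real p \<cdot>\<^sub>m ptrace_right m n (proj u)) $$ (i,j) = ptrace_right m n (proj (complex_of_real (sqrt p) \<cdot>\<^sub>v u)) $$ (i,j)"
    using i lt u by (auto simp: ptrace_right_def proj_def sum_distrib_left intro!: sum.cong simp flip: sp)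
qed (auto simp: ptrace_right_def)

lemma ptrace_left_scaled:
  assumes u: "dim_vec u = m * n" and p: "p \<ge> 0"
  shows "complex_of_real p \<cdot>\<^sub>m ptrace_left m n (proj u) = ptrace_left m n (proj (complex_of_real (sqrt p) \<cdot>\<^sub>v u))"
proof (rule eq_matI)
  fix i j assume "i < dim_row (ptrace_left m n (proj (complex_of_real (sqrt p) \<cdot>\<^sub>v u)))"
    "j < dim_col (ptrace_left m n (proj (complex_of_real (sqrt p) \<cdot>\<^sub>v u)))"
  hence i: "i < n" "j < n" by (auto simp: ptrace_left_def)
  have lt: "k*n+i < m*n" "k*n+j < m*n" if "k < m" for k using index_pair_lt[OF that i(1)] index_pair_lt[OF that i(2)] by auto
  have sp: "complex_of_real (sqrt p) * complex_of_real (sqrt p) = complex_of_real p"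
    using p by (simp flip: of_real_mult)
  show "(complex_of_real p \<cdot>\<^sub>m ptrace_left m n (proj u)) $$ (i,j) = ptrace_left m n (proj (complex_of_real (sqrt p) \<cdot>\<^sub>v u)) $$ (i,j)"
    using i lt u by (auto simp: ptrace_left_def proj_def sum_distrib_left intro!: sum.cong simp flip: sp)
qed (auto simp: ptrace_left_def)

lemma vn_entropy_swap_scaled:
  assumes u: "dim_vec u = m * n" and p: "p \<ge> 0"
  shows "vn_entropy (complex_of_real p \<cdot>\<^sub>m ptrace_right m n (proj u)) = vn_entropy (complex_of_real p \<cdot>\<^sub>m ptrace_left m n (proj u))"
  unfolding ptrace_right_scaled[OF u p] ptrace_left_scaled[OF u p]
  by (rule vn_entropy_ptrace_swap, simp add: u)

lemma ptrace_right_smult: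
  assumes A: "A \<in> carrier_mat (d1*d2) (d1*d2)"
  shows "ptrace_right d1 d2 (c \<cdot>\<^sub>m A) = c \<cdot>\<^sub>m ptrace_right d1 d2 A"
proof (rule eq_matI)
  fix i j assume "i < dim_row (c \<cdot>\<^sub>m ptrace_right d1 d2 A)" "j < dim_col (c \<cdot>\<^sub>m ptrace_right d1 d2 A)"
  hence i: "i < d1" "j < d1" by (auto simp: ptrace_right_def)
  have lt: "i*d2+k < d1*d2" "j*d2+k < d1*d2" if "k < d2" for k using index_pair_lt[OF i(1) that] index_pair_lt[OF i(2) that] by auto
  show "ptrace_right d1 d2 (c \<cdot>\<^sub>m A) $$ (i,j) = (c \<cdot>\<^sub>m ptrace_right d1 d2 A) $$ (i,j)"
    using i lt A by (auto simp: ptrace_right_def sum_distrib_left intro!: sum.cong)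
qed (auto simp: ptrace_right_def)

lemma ptrace_left_smult:
  assumes A: "A \<in> carrier_mat (d1*d2) (d1*d2)"
  shows "ptrace_left d1 d2 (c \<cdot>\<^sub>m A) = c \<cdot>\<^sub>m ptrace_left d1 d2 A"
proof (rule eq_matI)
  fix i j assume "i < dim_row (c \<cdot>\<^sub>m ptrace_left d1 d2 A)" "j < dim_col (c \<cdot>\<^sub>m ptrace_left d1 d2 A)"
  hence i: "i < d2" "j < d2" by (auto simp: ptrace_left_def)
  have lt: "k*d2+i < d1*d2" "k*d2+j < d1*d2" if "k < d1" for k using index_pair_lt[OF that i(1)] index_pair_lt[OF that i(2)] by auto
  show "ptrace_left d1 d2 (c \<cdot>\<^sub>m A) $$ (i,j) = (c \<cdot>\<^sub>m ptrace_left d1 d2 A) $$ (i,j)"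
    using i lt A by (auto simp: ptrace_left_def sum_distrib_left intro!: sum.cong)
qed (auto simp: ptrace_left_def)

text \<open>Block-diagonal matrices with n blocks of size d.  States that are classical on a
  flag register X have this form, and their entropy is the sum of the block entropies.\<close>

definition blockdiag :: "nat \<Rightarrow> nat \<Rightarrow> (nat \<Rightarrow> complex mat) \<Rightarrow> complex mat" where
  "blockdiag n d F = mat (n*d) (n*d) (\<lambda>(i,j). if i div d = j div d then F (i div d) $$ (i mod d, j mod d) else 0)"

lemma blockdiag_carrier[simp]: "blockdiag n d F \<in> carrier_mat (n*d) (n*d)"
  by (simp add: blockdiag_def)

lemma blockdiag_cong: "(\<And>x. x < n \<Longrightarrow> F x = G x) \<Longrightarrow> blockdiag n d F = blockdiag n d G"
  by (auto simp: blockdiag_def intro!: eq_matI) (metis div_lt_of_lt_mult)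

lemma char_poly_four_block_diag:
  fixes A B :: "complex mat"
  assumes A: "A \<in> carrier_mat n n" and B: "B \<in> carrier_mat m m"
  shows "char_poly (four_block_mat A (0\<^sub>m n m) (0\<^sub>m m n) B) = char_poly A * char_poly B"
proof -
  have "char_poly_matrix (four_block_mat A (0\<^sub>m n m) (0\<^sub>m m n) B)
     = four_block_mat (char_poly_matrix A) (0\<^sub>m n m) (0\<^sub>m m n) (char_poly_matrix B)"
    using A B by (auto intro!: eq_matI simp: char_poly_matrix_def)
  thus ?thesis unfolding char_poly_def
    by (simp, subst det_four_block_mat_lower_left_zero[of _ n _ m], insert A B, auto)
qed

lemma blockdiag_Suc:
  assumes F: "\<And>x. F x \<in> carrier_mat d d"
  shows "blockdiag (Suc n) d F = four_block_mat (blockdiag n d F) (0\<^sub>m (n*d) d) (0\<^sub>m d (n*d)) (F n)"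
proof (rule eq_matI)
  fix i j assume i: "i < dim_row (four_block_mat (blockdiag n d F) (0\<^sub>m (n*d) d) (0\<^sub>m d (n*d)) (F n))"
    and j: "j < dim_col (four_block_mat (blockdiag n d F) (0\<^sub>m (n*d) d) (0\<^sub>m d (n*d)) (F n))"
  have Fd: "dim_row (F x) = d" "dim_col (F x) = d" for x using F[of x] by auto
  have ii: "i < n*d + d" and jj: "j < n*d + d" using i j by (auto simp: blockdiag_def Fd)
  have hi: "n*d \<le> k \<Longrightarrow> k < n*d + d \<Longrightarrow> k div d = n \<and> k mod d = k - n*d" for k
  proof -
    assume a: "n*d \<le> k" "k < n*d + d"
    then obtain r where r: "k = n*d + r" "r < d" by (metis add_less_cancel_left le_Suc_ex)
    thus ?thesis by simp
  qed
  show "blockdiag (Suc n) d F $$ (i, j) = four_block_mat (blockdiag n d F) (0\<^sub>m (n*d) d) (0\<^sub>m d (n*d)) (F n) $$ (i, j)"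
  proof (cases "i < n*d")
    case True note it = this
    show ?thesis
    proof (cases "j < n*d")
      case True
      thus ?thesis using it ii jj by (simp add: blockdiag_def Fd)
    next
      case False
      have "j div d = n" using hi[of j] False jj by simp
      moreover have "i div d < n" using div_lt_of_lt_mult[OF it] .
      ultimately show ?thesis using it False ii jj by (simp add: blockdiag_def Fd)
    qed
  next
    case False note it = this
    have ih: "i div d = n" "i mod d = i - n*d" using hi[of i] it ii by auto
    show ?thesis
    proof (cases "j < n*d")
      case True
      have "j div d < n" using div_lt_of_lt_mult[OF True] .
      thus ?thesis using it True ii jj ih by (simp add: blockdiag_def Fd)
    next
      case False
      have "j div d = n" "j mod d = j - n*d" using hi[of j] False jj by auto
      thus ?thesis using it False ii jj ih by (simp add: blockdiag_def Fd)
    qed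
  qed
qed (insert F[of n], auto simp: blockdiag_def)

lemma char_poly_blockdiag:
  assumes F: "\<And>x. F x \<in> carrier_mat d d"
  shows "char_poly (blockdiag n d F) = (\<Prod>x<n. char_poly (F x))"
proof (induct n)
  case 0
  have "blockdiag 0 d F = 1\<^sub>m 0" by (auto intro!: eq_matI simp: blockdiag_def)
  thus ?case by (simp add: char_poly_def char_poly_matrix_def det_def)
next
  case (Suc n)
  show ?case unfolding blockdiag_Suc[OF F]
    by (subst char_poly_four_block_diag[of _ "n*d" _ d], insert F Suc, auto)
qed

lemma vn_entropy_blockdiag:
  assumes F: "\<And>x. F x \<in> carrier_mat d d"
  shows "vn_entropy (blockdiag n d F) = (\<Sum>x<n. vn_entropy (F x))"
proof -
  have nz: "char_poly (F x) \<noteq> 0" for x using char_poly_nz[OF F] .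
  have "proots (char_poly (blockdiag n d F)) = (\<Sum>x<n. proots (char_poly (F x)))"
    unfolding char_poly_blockdiag[OF F] by (rule proots_prod, use nz in auto)
  moreover have "(\<Sum>e \<in># (\<Sum>x<k. M x). eta (Re e)) = (\<Sum>x<k. \<Sum>e \<in># M x. eta (Re e))"
    for k and M :: "nat \<Rightarrow> complex multiset"
    by (induct k, auto)
  ultimately show ?thesis unfolding vn_entropy_eta by simp
qed

lemma ptrace_right_blockdiag:
  assumes d1: "0 < d1"
  shows "ptrace_right (n*d1) d2 (blockdiag n (d1*d2) F) = blockdiag n d1 (\<lambda>x. ptrace_right d1 d2 (F x))"
proof (rule eq_matI)
  fix i j assume i: "i < dim_row (blockdiag n d1 (\<lambda>x. ptrace_right d1 d2 (F x)))"
    and j: "j < dim_col (blockdiag n d1 (\<lambda>x. ptrace_right d1 d2 (F x)))"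
  hence i: "i < n*d1" and j: "j < n*d1" by (auto simp: blockdiag_def)
  have im: "i mod d1 < d1" "j mod d1 < d1" using d1 by auto
  have lt: "i*d2+k < n*(d1*d2)" "j*d2+k < n*(d1*d2)" if "k < d2" for k
    using index_pair_lt[OF i that] index_pair_lt[OF j that] by (auto simp: ac_simps)
  show "ptrace_right (n*d1) d2 (blockdiag n (d1*d2) F) $$ (i,j) = blockdiag n d1 (\<lambda>x. ptrace_right d1 d2 (F x)) $$ (i,j)"
    using i j im lt by (simp add: ptrace_right_def blockdiag_def index_regroup_div_mod[OF _ d1])
qed (auto simp: ptrace_right_def blockdiag_def)

lemma ptrace_left_blockdiag:
  assumes d1: "0 < d1"
  shows "ptrace_left (n*d1) d2 (blockdiag n (d1*d2) F) = mat d2 d2 (\<lambda>(i,j). \<Sum>x<n. ptrace_left d1 d2 (F x) $$ (i,j))"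
proof (rule eq_matI)
  fix i j assume i: "i < dim_row (mat d2 d2 (\<lambda>(i,j). \<Sum>x<n. ptrace_left d1 d2 (F x) $$ (i,j)))"
    and j: "j < dim_col (mat d2 d2 (\<lambda>(i,j). \<Sum>x<n. ptrace_left d1 d2 (F x) $$ (i,j)))"
  hence i: "i < d2" and j: "j < d2" by auto
  have "ptrace_left (n*d1) d2 (blockdiag n (d1*d2) F) $$ (i,j) = (\<Sum>k<n*d1. blockdiag n (d1*d2) F $$ (k*d2+i, k*d2+j))"
    using i j by (simp add: ptrace_left_def)
  also have "\<dots> = (\<Sum>x<n. \<Sum>a<d1. blockdiag n (d1*d2) F $$ ((x*d1+a)*d2+i, (x*d1+a)*d2+j))"
    by (rule sum_index_pair)
  also have "\<dots> = (\<Sum>x<n. \<Sum>a<d1. F x $$ (a*d2+i, a*d2+j))"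
  proof (intro sum.cong refl)
    fix x a assume x: "x \<in> {..<n}" and a: "a \<in> {..<d1}"
    have xa: "x*d1+a < n*d1" using index_pair_lt x a by auto
    have lt: "(x*d1+a)*d2+i < n*(d1*d2)" "(x*d1+a)*d2+j < n*(d1*d2)"
      using index_pair_lt[OF xa i] index_pair_lt[OF xa j] by (auto simp: ac_simps)
    show "blockdiag n (d1*d2) F $$ ((x*d1+a)*d2+i, (x*d1+a)*d2+j) = F x $$ (a*d2+i, a*d2+j)"
      using lt a by (simp add: blockdiag_def index_regroup_div_mod[OF i d1] index_regroup_div_mod[OF j d1])
  qed
  also have "\<dots> = (\<Sum>x<n. ptrace_left d1 d2 (F x) $$ (i,j))"
    using i j by (simp add: ptrace_left_def)
  finally show "ptrace_left (n*d1) d2 (blockdiag n (d1*d2) F) $$ (i,j) = mat d2 d2 (\<lambda>(i,j). \<Sum>x<n. ptrace_left d1 d2 (F x) $$ (i,j)) $$ (i,j)"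
    using i j by simp
qed (auto simp: ptrace_left_def)

lemma entropy_le_log_card:
  fixes v :: "'i \<Rightarrow> real"
  assumes I: "finite I" "I \<noteq> {}" and v: "\<And>i. i \<in> I \<Longrightarrow> v i \<ge> 0" and s: "(\<Sum>i\<in>I. v i) = 1"
  shows "(\<Sum>i\<in>I. eta (v i)) \<le> log 2 (real (card I))"
proof -
  define n where "n = real (card I)"
  have n: "n > 0" using I by (simp add: n_def card_gt_0_iff)
  have pt: "eta t \<le> (1/n - t + t * ln n) / ln 2" if t: "t \<ge> 0" for t
  proof (cases "t > 0")
    case True
    have y: "1 / (n*t) > 0" using n True by simp
    have "ln (1/(n*t)) \<le> 1/(n*t) - 1" by (rule ln_le_minus_one[OF y])
    hence "t * ln (1/(n*t)) \<le> t * (1/(n*t) - 1)" using True by (intro mult_left_mono) auto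
    moreover have "t * ln (1/(n*t)) = - t * ln t - t * ln n"
      using True n by (simp add: ln_div ln_mult algebra_simps)
    moreover have "t * (1/(n*t) - 1) = 1/n - t" using True n by (simp add: field_simps)
    ultimately have "- t * ln t \<le> 1/n - t + t * ln n" by linarith
    hence "- t * ln t / ln 2 \<le> (1/n - t + t * ln n) / ln 2" by (rule divide_right_mono) simp
    thus ?thesis using True by (simp add: eta_def log_def)
  next
    case False
    hence "t = 0" using t by simp
    thus ?thesis using n by simp
  qed
  have "(\<Sum>i\<in>I. eta (v i)) \<le> (\<Sum>i\<in>I. (1/n - v i + v i * ln n) / ln 2)"
    using v pt by (intro sum_mono) auto
  also have "\<dots> = (real (card I) / n - 1 + ln n) / ln 2"
    unfolding sum_divide_distrib[symmetric] sum.distrib sum_subtractf sum_distrib_right[symmetric] s by simp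
  also have "\<dots> = log 2 (real (card I))" using n by (simp add: n_def log_def)
  finally show ?thesis .
qed

lemma x_ln_x_tendsto_0: "((\<lambda>t::real. t * ln t) \<longlongrightarrow> 0) (at_right 0)"
proof -
  have "((\<lambda>t::real. - (ln (inverse t) / inverse t)) \<longlongrightarrow> - 0) (at_right 0)"
    by (intro tendsto_minus filterlim_compose[OF ln_x_over_x_tendsto_0 filterlim_inverse_at_top_right])
  moreover have "eventually (\<lambda>t::real. - (ln (inverse t) / inverse t) = t * ln t) (at_right 0)"
  proof (rule eventually_mono[OF eventually_at_right_less[of 0]])
    fix t :: real assume "0 < t" thus "- (ln (inverse t) / inverse t) = t * ln t"
      by (simp add: ln_inverse divide_inverse)
  qed
  ultimately show ?thesis by (simp add: tendsto_cong)
qed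

lemma eta_cont: "continuous_on {0..1} eta"
proof (rule continuous_on_eq_continuous_within[THEN iffD2], rule ballI)
  fix x :: real assume x: "x \<in> {0..1}"
  show "continuous (at x within {0..1}) eta"
  proof (cases "x = 0")
    case True
    have "((\<lambda>t::real. - (t * ln t) / ln 2) \<longlongrightarrow> - 0 / ln (2::real)) (at_right 0)"
      by (intro tendsto_divide tendsto_minus x_ln_x_tendsto_0 tendsto_const) simp
    moreover have "eventually (\<lambda>t. - (t * ln t) / ln 2 = eta t) (at_right 0)"
      by (rule eventually_mono[OF eventually_at_right_less[of 0]], simp add: eta_def log_def)
    ultimately have "(eta \<longlongrightarrow> 0) (at_right 0)" by (simp add: tendsto_cong)
    thus ?thesis using True unfolding continuous_within by (simp add: at_within_Icc_at_right)
  next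
    case False
    hence xp: "x > 0" using x by simp
    have "isCont (\<lambda>t. - t * log 2 t) x" using xp by (intro continuous_intros) auto
    moreover have "eventually (\<lambda>t. - t * log 2 t = eta t) (nhds x)"
      using eventually_nhds_in_open[of "{0<..}" x] xp
      by (auto elim!: eventually_mono simp: eta_def)
    ultimately have "isCont eta x" using isCont_cong[of "\<lambda>t. - t * log 2 t" eta x] by simp
    thus ?thesis by (rule continuous_at_imp_continuous_at_within)
  qed
qed


section \<open>Spectrum of the spin matrices\<close>

text \<open>Up to scaling it is the n-fold symmetric
  power of the qubit operator [[a, c*], [c, b]], so its eigenvalues are
  k (s + j l1 + (n - j) l2) with l1, l2 the eigenvalues of that 2 x 2 matrix.  All marginals
  of the cloning channel output turn out to be of this form.\<close>

definition spin_mat :: "nat \<Rightarrow> real \<Rightarrow> real \<Rightarrow> real \<Rightarrow> real \<Rightarrow> complex \<Rightarrow> complex mat" where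
  "spin_mat n k s a b c = mat (Suc n) (Suc n) (\<lambda>(i,j). complex_of_real k *
     ((if j = i then complex_of_real (s + real n * a + (b - a) * real i) else 0)
    + (if Suc j = i then c * complex_of_real (sqrt (real i * (real n + 1 - real i))) else 0)
    + (if j = Suc i then cnj c * complex_of_real (sqrt ((real i + 1) * (real n - real i))) else 0)))"

lemma spin_mat_carrier[simp]: "spin_mat n k s a b c \<in> carrier_mat (Suc n) (Suc n)"
  by (simp add: spin_mat_def)

text \<open>The polynomial model: the spin matrix corresponds, in the basis
  sqrt ((n - e)! e!) X^e of polynomials of degree at most n, to the first-order
  differential operator spin_op.  It is a derivation in the sense of spin_op_mult, so
  products of eigenpolynomials are eigenpolynomials.\<close>

definition spin_op :: "nat \<Rightarrow> complex \<Rightarrow> complex \<Rightarrow> complex \<Rightarrow> complex \<Rightarrow> complex poly \<Rightarrow> complex poly" where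
  "spin_op n a b C1 C2 p = Polynomial.smult (of_nat n) [:a, C1:] * p + [:C2, b - a, - C1:] * pderiv p"

lemma spin_op_mult: "spin_op (n1+n2) a b C1 C2 (p*q) = spin_op n1 a b C1 C2 p * q + p * spin_op n2 a b C1 C2 q"
  unfolding spin_op_def pderiv_mult by (simp add: algebra_simps smult_add_left smult_add_right)

lemma spin_op_one: "spin_op 0 a b C1 C2 1 = 0" unfolding spin_op_def by simp

lemma spin_op_power: assumes "spin_op 1 a b C1 C2 l = Polynomial.smult lam l"
  shows "spin_op k a b C1 C2 (l^k) = Polynomial.smult (of_nat k * lam) (l^k)"
proof (induct k)
  case 0 thus ?case by (simp add: spin_op_one)
next
  case (Suc k)
  have "spin_op (Suc k) a b C1 C2 (l^Suc k) = spin_op (1 + k) a b C1 C2 (l * l^k)" by simp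
  also have "\<dots> = Polynomial.smult lam l * l^k + l * Polynomial.smult (of_nat k * lam) (l^k)"
    unfolding spin_op_mult assms Suc ..
  also have "\<dots> = Polynomial.smult (of_nat (Suc k) * lam) (l^Suc k)" by (simp add: algebra_simps smult_add_left smult_add_right)
  finally show ?case .
qed

lemma spin_op_prod: assumes "spin_op 1 a b C1 C2 l1 = Polynomial.smult lam1 l1" "spin_op 1 a b C1 C2 l2 = Polynomial.smult lam2 l2"
  shows "spin_op (k + m) a b C1 C2 (l1^k * l2^m) = Polynomial.smult (of_nat k * lam1 + of_nat m * lam2) (l1^k * l2^m)"
  unfolding spin_op_mult spin_op_power[OF assms(1)] spin_op_power[OF assms(2)] by (simp add: algebra_simps smult_add_left smult_add_right)

lemma coeff_spin_op: "coeff (spin_op n a b C1 C2 p) e =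
   (of_nat n * a + (b - a) * of_nat e) * coeff p e
   + (if e = 0 then 0 else C1 * (of_nat n + 1 - of_nat e) * coeff p (e - 1))
   + C2 * of_nat (Suc e) * coeff p (Suc e)"
proof (cases e)
  case 0 thus ?thesis by (simp add: spin_op_def coeff_pderiv mult_pCons_left algebra_simps)
next
  case (Suc e')
  show ?thesis
  proof (cases e')
    case 0 thus ?thesis using Suc by (simp add: spin_op_def coeff_pderiv mult_pCons_left algebra_simps)
  next
    case (Suc e'')
    thus ?thesis using \<open>e = Suc e'\<close> by (simp add: spin_op_def coeff_pderiv mult_pCons_left algebra_simps)
  qed
qed

text \<open>A linear polynomial c X + l - b is an eigenpolynomial of spin_op for degree 1
  exactly when l is an eigenvalue of the 2 x 2 qubit block.\<close>

lemma spin_op_linear_eigen: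
  fixes a b :: real and c :: complex and lam :: real
  assumes q: "lam^2 - (a+b)*lam + a*b - (cmod c)^2 = 0"
  shows "spin_op 1 (of_real a) (of_real b) c (cnj c) [:of_real lam - of_real b, c:]
       = Polynomial.smult (of_real lam) [:of_real lam - of_real b, c:]"
proof -
  have cc0: "c * cnj c = (complex_of_real (cmod c))^2" by (metis of_real_power complex_norm_square)
  have cc: "cnj c * c = complex_of_real ((cmod c)^2)" using cc0 by (simp add: mult.commute)
  have q': "complex_of_real a * (complex_of_real lam - complex_of_real b) + cnj c * c
          = complex_of_real lam * (complex_of_real lam - complex_of_real b)"
  proof -
    have "a * (lam - b) + (cmod c)^2 = lam * (lam - b)" using q by (simp add: algebra_simps power2_eq_square)
    hence "complex_of_real (a * (lam - b) + (cmod c)^2) = complex_of_real (lam * (lam - b))" by simp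
    thus ?thesis unfolding cc by (simp add: algebra_simps)
  qed
  show ?thesis unfolding spin_op_def using q'
    by (simp add: mult_pCons_left pderiv_pCons algebra_simps smult_add_right)
qed

definition fact_weight :: "nat \<Rightarrow> nat \<Rightarrow> real" where
  "fact_weight n e = sqrt (fact (n - e) * fact e)"

lemma fact_weight_pos: "fact_weight n e > 0" unfolding fact_weight_def by simp

lemma fact_weight_down: assumes "0 < i" "i \<le> n"
  shows "sqrt (real i * (real n + 1 - real i)) * fact_weight n (i - 1) = (real n + 1 - real i) * fact_weight n i"
proof -
  obtain j where j: "i = Suc j" using assms by (cases i, auto)
  have nj: "n - j = Suc (n - i)" using assms j by simp
  have jn: "j \<le> n" using assms j by simp
  have e0: "real (n - j) = real n - real j" using jn by (rule of_nat_diff)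
  have e: "real n + 1 - real i = real (n - j)" unfolding e0 j by simp
  have "sqrt (real i * (real n + 1 - real i)) * fact_weight n (i - 1)
     = sqrt (real i * real (n - j) * (fact (n - j) * fact j))"
    unfolding fact_weight_def e j by (simp add: real_sqrt_mult mult.assoc e0)
  also have "real i * real (n - j) * (fact (n - j) * fact j) = (real (n - j))^2 * (fact (n - i) * fact i)"
    unfolding nj j by (simp add: algebra_simps power2_eq_square)
  also have "sqrt \<dots> = real (n - j) * fact_weight n i" unfolding fact_weight_def by (simp add: real_sqrt_mult)
  finally show ?thesis unfolding e .
qed

lemma fact_weight_up: assumes "i < n"
  shows "sqrt ((real i + 1) * (real n - real i)) * fact_weight n (Suc i) = (real i + 1) * fact_weight n i"
proof -
  have nj: "n - i = Suc (n - Suc i)" using assms by simp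
  have e: "real n - real i = real (n - i)" using assms by (simp add: of_nat_diff[of i n])
  have "sqrt ((real i + 1) * (real n - real i)) * fact_weight n (Suc i)
     = sqrt ((real i + 1) * real (n - i) * (fact (n - Suc i) * fact (Suc i)))"
    unfolding fact_weight_def e by (simp add: real_sqrt_mult mult.assoc)
  also have "(real i + 1) * real (n - i) * (fact (n - Suc i) * fact (Suc i)) = (real i + 1)^2 * (fact (n - i) * fact i)"
    unfolding nj by (simp add: algebra_simps power2_eq_square)
  also have "sqrt \<dots> = (real i + 1) * fact_weight n i" unfolding fact_weight_def
    by (simp add: real_sqrt_mult add_nonneg_nonneg)
  finally show ?thesis .
qed

lemma spin_mat_mult_vec:
  fixes v :: "complex vec" assumes i: "i < Suc n" and v: "dim_vec v = Suc n"
  shows "(spin_mat n k s a b c *\<^sub>v v) $ i = complex_of_real k * (complex_of_real (s + real n * a + (b - a) * real i) * v $ i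
     + (if 0 < i then c * complex_of_real (sqrt (real i * (real n + 1 - real i))) * v $ (i - 1) else 0)
     + (if i < n then cnj c * complex_of_real (sqrt ((real i + 1) * (real n - real i))) * v $ (Suc i) else 0))"
proof -
  have "(spin_mat n k s a b c *\<^sub>v v) $ i = (\<Sum>j<Suc n. spin_mat n k s a b c $$ (i,j) * v $ j)"
    using i v by (simp add: spin_mat_def scalar_prod_def lessThan_atLeast0)
  also have "\<dots> = complex_of_real k * ((\<Sum>j<Suc n. (if j = i then complex_of_real (s + real n * a + (b - a) * real i) * v $ j else 0))
    + (\<Sum>j<Suc n. (if 0 < i then (if j = i - 1 then c * complex_of_real (sqrt (real i * (real n + 1 - real i))) * v $ j else 0) else 0))
    + (\<Sum>j<Suc n. (if j = Suc i then cnj c * complex_of_real (sqrt ((real i + 1) * (real n - real i))) * v $ j else 0)))"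
    using i unfolding sum.distrib[symmetric] sum_distrib_left
    by (intro sum.cong refl, auto simp: spin_mat_def algebra_simps)
  also have "\<dots> = complex_of_real k * (complex_of_real (s + real n * a + (b - a) * real i) * v $ i
     + (if 0 < i then c * complex_of_real (sqrt (real i * (real n + 1 - real i))) * v $ (i - 1) else 0)
     + (if i < n then cnj c * complex_of_real (sqrt ((real i + 1) * (real n - real i))) * v $ (Suc i) else 0))"
  proof -
    have s1: "(\<Sum>j<Suc n. if j = i then X j else 0) = X i" for X :: "nat \<Rightarrow> complex" using i by simp
    have s2: "(\<Sum>j<Suc n. if 0 < i then (if j = i - 1 then X j else 0) else 0) = (if 0 < i then X (i - 1) else 0)"
      for X :: "nat \<Rightarrow> complex" using i by (cases "0 < i", simp_all)
    have s3: "(\<Sum>j<Suc n. if j = Suc i then X j else 0) = (if i < n then X (Suc i) else 0)"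
      for X :: "nat \<Rightarrow> complex" using i by simp
    show ?thesis
      by (subst s1[of "\<lambda>j. complex_of_real (s + real n * a + (b - a) * real i) * v $ j"],
          subst s2[of "\<lambda>j. c * complex_of_real (sqrt (real i * (real n + 1 - real i))) * v $ j"],
          subst s3[of "\<lambda>j. cnj c * complex_of_real (sqrt ((real i + 1) * (real n - real i))) * v $ j"], rule refl)
  qed
  finally show ?thesis .
qed

lemma spin_mat_mult_weighted:
  fixes a b k s :: real and c :: complex and P :: "complex poly"
  assumes deg: "degree P \<le> n" and i: "i < Suc n"
  defines "v \<equiv> vec (Suc n) (\<lambda>e. complex_of_real (fact_weight n e) * coeff P e)"
  shows "(spin_mat n k s a b c *\<^sub>v v) $ i = complex_of_real k * complex_of_real (fact_weight n i) *
     (complex_of_real (s + real n * a + (b - a) * real i) * coeff P i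
      + (if 0 < i then c * (of_nat n + 1 - of_nat i) * coeff P (i - 1) else 0)
      + cnj c * of_nat (Suc i) * coeff P (Suc i))"
proof -
  have down: "complex_of_real (sqrt (real i * (real n + 1 - real i))) * complex_of_real (fact_weight n (i - 1))
      = (of_nat n + 1 - of_nat i) * complex_of_real (fact_weight n i)" if "0 < i"
    using fact_weight_down[OF that] i unfolding of_real_mult[symmetric] by simp
  have up: "complex_of_real (sqrt ((real i + 1) * (real n - real i))) * complex_of_real (fact_weight n (Suc i))
      = of_nat (Suc i) * complex_of_real (fact_weight n i)" if "i < n"
    using fact_weight_up[OF that] unfolding of_real_mult[symmetric] by (simp add: add.commute)
  have lower: "(if 0 < i then c * complex_of_real (sqrt (real i * (real n + 1 - real i))) * v $ (i - 1) else 0)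
      = complex_of_real (fact_weight n i) * (if 0 < i then c * (of_nat n + 1 - of_nat i) * coeff P (i - 1) else 0)"
    using i down by (auto simp: v_def mult.assoc[symmetric] mult.commute[of _ c])
  have upper: "(if i < n then cnj c * complex_of_real (sqrt ((real i + 1) * (real n - real i))) * v $ (Suc i) else 0)
      = complex_of_real (fact_weight n i) * (cnj c * of_nat (Suc i) * coeff P (Suc i))"
  proof (cases "i < n")
    case True
    thus ?thesis using up by (simp add: v_def mult.assoc[symmetric] mult.commute[of _ "cnj c"])
  next
    case False
    hence "coeff P (Suc i) = 0" using i deg by (simp add: coeff_eq_0)
    thus ?thesis using False by simp
  qed
  have "(spin_mat n k s a b c *\<^sub>v v) $ i = complex_of_real k * (complex_of_real (s + real n * a + (b - a) * real i) * v $ i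
     + (if 0 < i then c * complex_of_real (sqrt (real i * (real n + 1 - real i))) * v $ (i - 1) else 0)
     + (if i < n then cnj c * complex_of_real (sqrt ((real i + 1) * (real n - real i))) * v $ (Suc i) else 0))"
    by (rule spin_mat_mult_vec[OF i], simp add: v_def)
  also have "v $ i = complex_of_real (fact_weight n i) * coeff P i" using i by (simp add: v_def)
  finally show ?thesis unfolding lower upper by (simp add: algebra_simps)
qed

lemma spin_mat_eigenvector:
  fixes a b :: real and c L :: complex and P :: "complex poly"
  assumes top: "spin_op n (of_real a) (of_real b) c (cnj c) P = Polynomial.smult L P"
  and deg: "degree P \<le> n"
  shows "spin_mat n k s a b c *\<^sub>v vec (Suc n) (\<lambda>e. of_real (fact_weight n e) * coeff P e)
       = (of_real k * (of_real s + L)) \<cdot>\<^sub>v vec (Suc n) (\<lambda>e. of_real (fact_weight n e) * coeff P e)"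
proof (rule eq_vecI)
  fix i assume "i < dim_vec ((of_real k * (of_real s + L)) \<cdot>\<^sub>v vec (Suc n) (\<lambda>e. complex_of_real (fact_weight n e) * coeff P e))"
  hence i: "i < Suc n" by simp
  have "coeff (spin_op n (of_real a) (of_real b) c (cnj c) P) i = L * coeff P i" using top by simp
  hence rec: "(of_nat n * of_real a + (of_real b - of_real a) * of_nat i) * coeff P i
      + (if i = 0 then 0 else c * (of_nat n + 1 - of_nat i) * coeff P (i - 1))
      + cnj c * of_nat (Suc i) * coeff P (Suc i) = L * coeff P i"
    unfolding coeff_spin_op .
  have "(spin_mat n k s a b c *\<^sub>v vec (Suc n) (\<lambda>e. complex_of_real (fact_weight n e) * coeff P e)) $ i
      = complex_of_real k * complex_of_real (fact_weight n i) * (complex_of_real s * coeff P i + L * coeff P i)"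
    unfolding spin_mat_mult_weighted[OF deg i] rec[symmetric] by (simp add: algebra_simps)
  also have "\<dots> = ((of_real k * (of_real s + L)) \<cdot>\<^sub>v vec (Suc n) (\<lambda>e. complex_of_real (fact_weight n e) * coeff P e)) $ i"
    using i by (simp add: algebra_simps)
  finally show "(spin_mat n k s a b c *\<^sub>v vec (Suc n) (\<lambda>e. complex_of_real (fact_weight n e) * coeff P e)) $ i
      = ((of_real k * (of_real s + L)) \<cdot>\<^sub>v vec (Suc n) (\<lambda>e. complex_of_real (fact_weight n e) * coeff P e)) $ i" .
qed (simp add: spin_mat_def)

text \<open>For c \<noteq> 0, every value k (s + j l1 + (n - j) l2), j \<le> n, with l1, l2 roots of the
  characteristic polynomial of the qubit block, is an eigenvalue; the eigenpolynomial is
  (c X + l1 - b)^j (c X + l2 - b)^(n - j).\<close>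

lemma spin_mat_eigenvalue:
  fixes a b k s l1 l2 :: real and c :: complex
  assumes c0: "c \<noteq> 0" and j: "j \<le> n"
    and q1: "l1^2 - (a+b)*l1 + a*b - (cmod c)^2 = 0"
    and q2: "l2^2 - (a+b)*l2 + a*b - (cmod c)^2 = 0"
  shows "poly (char_poly (spin_mat n k s a b c)) (complex_of_real (k * (s + real j * l1 + real (n - j) * l2))) = 0"
proof -
  define A where "A = spin_mat n k s a b c"
  have A: "A \<in> carrier_mat (Suc n) (Suc n)" by (simp add: A_def)
  define p1 where "p1 = [:complex_of_real l1 - complex_of_real b, c:]"
  define p2 where "p2 = [:complex_of_real l2 - complex_of_real b, c:]"
  define P where "P = p1 ^ j * p2 ^ (n - j)"
  have T1: "spin_op 1 (of_real a) (of_real b) c (cnj c) p1 = Polynomial.smult (of_real l1) p1"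
    unfolding p1_def by (rule spin_op_linear_eigen[OF q1])
  have T2: "spin_op 1 (of_real a) (of_real b) c (cnj c) p2 = Polynomial.smult (of_real l2) p2"
    unfolding p2_def by (rule spin_op_linear_eigen[OF q2])
  have TP: "spin_op n (of_real a) (of_real b) c (cnj c) P
      = Polynomial.smult (of_nat j * of_real l1 + of_nat (n - j) * of_real l2) P"
    using spin_op_prod[OF T1 T2, of j "n - j"] j unfolding P_def by simp
  have d1: "degree p1 = 1" "degree p2 = 1" and nz: "p1 \<noteq> 0" "p2 \<noteq> 0"
    using c0 by (auto simp: p1_def p2_def)
  have degP: "degree P = n" unfolding P_def using nz d1 j
    by (simp add: degree_mult_eq degree_power_eq)
  have lc: "coeff P n \<noteq> 0" using nz degP unfolding P_def by (metis leading_coeff_0_iff mult_eq_0_iff power_eq_0_iff)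
  define v where "v = vec (Suc n) (\<lambda>e. complex_of_real (fact_weight n e) * coeff P e)"
  have ev: "A *\<^sub>v v = (of_real k * (of_real s + (of_nat j * of_real l1 + of_nat (n - j) * of_real l2))) \<cdot>\<^sub>v v"
    unfolding A_def v_def by (rule spin_mat_eigenvector[OF TP], simp add: degP)
  have vnz: "v \<noteq> 0\<^sub>v (Suc n)"
  proof
    assume "v = 0\<^sub>v (Suc n)"
    hence "v $ n = 0" by simp
    thus False using lc fact_weight_pos[of n n] by (simp add: v_def)
  qed
  have "eigenvalue A (of_real k * (of_real s + (of_nat j * of_real l1 + of_nat (n - j) * of_real l2)))"
    unfolding eigenvalue_def eigenvector_def using ev vnz A by (intro exI[of _ v], auto simp: v_def)
  thus ?thesis using eigenvalue_root_char_poly[OF A] unfolding A_def by (simp add: add.assoc)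
qed

lemma proots_diag_prod:
  "proots (\<Prod>a\<leftarrow>xs. [:- a, 1:]) = mset (xs :: complex list)"
proof (induct xs)
  case (Cons a xs)
  have nz: "(\<Prod>a\<leftarrow>xs. [:- a, 1:]) \<noteq> 0" by (auto simp: prod_list_zero_iff)
  have "proots ([:- a, 1:] * (\<Prod>a\<leftarrow>xs. [:- a, 1:])) = proots [:- a, 1:] + proots (\<Prod>a\<leftarrow>xs. [:- a, 1:])"
    by (rule proots_mult, simp, rule nz)
  thus ?case using Cons by simp
qed simp

lemma mset_eq_by_subset:
  fixes xs :: "'a list" assumes d: "distinct xs" and s: "set xs \<subseteq> set_mset M" and sz: "size M = length xs"
  shows "M = mset xs"
proof -
  have sub: "mset xs \<subseteq># M"
  proof (rule mset_subset_eqI)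
    fix x show "count (mset xs) x \<le> count M x"
      using d s by (cases "x \<in> set xs", auto simp: distinct_count_atmost_1)
  qed
  have "M = mset xs + (M - mset xs)" using sub by (simp add: subset_mset.add_diff_inverse)
  moreover have "size (M - mset xs) = 0" using sub sz by (simp add: size_Diff_submset)
  ultimately show ?thesis by simp
qed

lemma rev_upt_map: "rev [0..<Suc n] = map (\<lambda>i. n - i) [0..<Suc n]"
  by (rule nth_equalityI) (simp_all add: rev_nth del: upt_Suc)

text \<open>In the degenerate case k = 0 or c = 0 the spin matrix is diagonal and its spectrum
  can be read off (the two eigenvalue orderings differ by reversing the list).\<close>

lemma spin_mat_spectrum_diagonal:
  fixes a b k s :: real and c :: complex
  assumes deg: "k = 0 \<or> c = 0"
  defines "r \<equiv> sqrt ((a-b)^2 + 4*(cmod c)^2)"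
  shows "proots (char_poly (spin_mat n k s a b c)) =
     mset (map (\<lambda>j. complex_of_real (k * (s + real j * ((a+b+r)/2) + real (n - j) * ((a+b-r)/2)))) [0..<Suc n])"
proof -
  define dg where "dg = (\<lambda>i. complex_of_real (k * (s + real n * a + (b - a) * real i)))"
  define eig where "eig = (\<lambda>j. complex_of_real (k * (s + real j * ((a+b+r)/2) + real (n - j) * ((a+b-r)/2))))"
  have ut: "upper_triangular (spin_mat n k s a b c)"
    unfolding upper_triangular_def using deg by (auto simp: spin_mat_def)
  have cp: "char_poly (spin_mat n k s a b c) = (\<Prod>a\<leftarrow>diag_mat (spin_mat n k s a b c). [:- a, 1:])"
    by (rule char_poly_upper_triangular[OF spin_mat_carrier ut])
  have dm: "diag_mat (spin_mat n k s a b c) = map dg [0..<Suc n]"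
    by (auto simp: diag_mat_def spin_mat_def dg_def intro!: map_cong)
  have "mset (map dg [0..<Suc n]) = mset (map eig [0..<Suc n])"
  proof (cases "k = 0")
    case True thus ?thesis by (simp add: dg_def eig_def map_replicate_const)
  next
    case False
    hence "c = 0" using deg by simp
    hence r: "r = \<bar>a - b\<bar>" unfolding r_def by simp
    show ?thesis
    proof (cases "a \<ge> b")
      case True
      hence l: "(a+b+r)/2 = a" "(a+b-r)/2 = b" using r by auto
      have "mset (map eig [0..<Suc n]) = mset (map eig (rev [0..<Suc n]))"
        by (simp only: mset_map mset_rev)
      also have "\<dots> = mset (map dg [0..<Suc n])"
        unfolding rev_upt_map map_map eig_def dg_def l
        by (intro arg_cong[where f=mset] map_cong refl, auto simp: of_nat_diff algebra_simps)
      finally show ?thesis by simp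
    next
      case False
      hence l: "(a+b+r)/2 = b" "(a+b-r)/2 = a" using r by auto
      show ?thesis unfolding eig_def dg_def l
        by (intro arg_cong[where f=mset] map_cong refl, auto simp: of_nat_diff algebra_simps)
    qed
  qed
  thus ?thesis unfolding cp proots_diag_prod dm eig_def .
qed

text \<open>The full spectrum of the spin matrix.  In the generic case the n + 1 eigenvalues found
  above are distinct (since l1 - l2 = r > 0), hence they exhaust the roots.\<close>

lemma spin_mat_spectrum:
  fixes a b k s :: real and c :: complex
  defines "r \<equiv> sqrt ((a-b)^2 + 4*(cmod c)^2)"
  shows "proots (char_poly (spin_mat n k s a b c)) =
     mset (map (\<lambda>j. complex_of_real (k * (s + real j * ((a+b+r)/2) + real (n - j) * ((a+b-r)/2)))) [0..<Suc n])"
proof (cases "k = 0 \<or> c = 0")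
  case True
  thus ?thesis unfolding r_def by (rule spin_mat_spectrum_diagonal)
next
  case False
  hence k0: "k \<noteq> 0" and c0: "c \<noteq> 0" by auto
  have rpos: "r > 0" unfolding r_def using c0 by (intro real_sqrt_gt_zero) (simp add: add_nonneg_pos)
  have r2: "r^2 = (a-b)^2 + 4*(cmod c)^2" unfolding r_def by simp
  define l1 where "l1 = (a+b+r)/2"
  define l2 where "l2 = (a+b-r)/2"
  have q1: "l1^2 - (a+b)*l1 + a*b - (cmod c)^2 = 0" and q2: "l2^2 - (a+b)*l2 + a*b - (cmod c)^2 = 0"
    unfolding l1_def l2_def using r2 by (simp_all add: power2_eq_square field_simps)
  define mu where "mu = (\<lambda>j. complex_of_real (k * (s + real j * l1 + real (n - j) * l2)))"
  define A where "A = spin_mat n k s a b c"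
  have A: "A \<in> carrier_mat (Suc n) (Suc n)" by (simp add: A_def)
  have dist: "distinct (map mu [0..<Suc n])"
  proof -
    have "inj_on mu {0..<Suc n}"
    proof
      fix x y assume x: "x \<in> {0..<Suc n}" and y: "y \<in> {0..<Suc n}" and e: "mu x = mu y"
      have "k * (s + real x * l1 + real (n - x) * l2) = k * (s + real y * l1 + real (n - y) * l2)"
        using e unfolding mu_def of_real_eq_iff by blast
      hence "s + real x * l1 + real (n - x) * l2 = s + real y * l1 + real (n - y) * l2" using k0 by simp
      hence "real x * (l1 - l2) = real y * (l1 - l2)" using x y by (simp add: of_nat_diff algebra_simps)
      moreover have "l1 - l2 = r" unfolding l1_def l2_def by (simp add: field_simps)
      ultimately show "x = y" using rpos by simp
    qed
    thus ?thesis by (simp add: distinct_map del: upt_Suc)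
  qed
  have sub: "set (map mu [0..<Suc n]) \<subseteq> set_mset (proots (char_poly A))"
  proof
    fix z assume "z \<in> set (map mu [0..<Suc n])"
    then obtain j where j: "j \<le> n" and z: "z = mu j" by (auto simp del: upt_Suc simp: less_Suc_eq_le)
    have "poly (char_poly A) z = 0"
      unfolding z mu_def A_def by (rule spin_mat_eigenvalue[OF c0 j q1 q2])
    thus "z \<in> set_mset (proots (char_poly A))" using char_poly_nz[OF A] by simp
  qed
  have sz: "size (proots (char_poly A)) = length (map mu [0..<Suc n])"
    using degree_monic_char_poly[OF A] by (simp add: size_proots_complex)
  show ?thesis using mset_eq_by_subset[OF dist sub sz] unfolding A_def mu_def l1_def l2_def .
qed

lemma sum_mset_map_list: "(\<Sum>e \<in># mset (map f xs). g e) = (\<Sum>x\<leftarrow>xs. g (f x))"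
  by (induct xs) auto

lemma vn_entropy_spin_mat:
  fixes a b k s :: real and c :: complex
  shows "vn_entropy (spin_mat n k s a b c) =
     (\<Sum>j<Suc n. eta (k * (s + real j * ((a+b+sqrt ((a-b)^2 + 4*(cmod c)^2))/2)
        + real (n - j) * ((a+b-sqrt ((a-b)^2 + 4*(cmod c)^2))/2))))"
  unfolding vn_entropy_eta spin_mat_spectrum sum_mset_map_list Re_complex_of_real
  by (simp add: sum_list_distinct_conv_sum_set atLeast0LessThan del: upt_Suc)


section \<open>Qubit parameters of a pure state on A (x) A'\<close>

text \<open>The qubit marginal Tr_A phi of a unit vector phi on A (x) A' is the 2 x 2 matrix
  [[pop0, coh], [coh*, pop1]].  Its eigenvalues are (1 \<plusminus> r)/2 with r the Bloch length.\<close>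

lemma qubit_marginal_entry:
  assumes phi: "dim_vec phi = dA * 2" and i: "i < 2" and j: "j < 2"
  shows "ptrace_left dA 2 (proj phi) $$ (i,j) = (\<Sum>a<dA. phi $ (a*2+i) * cnj (phi $ (a*2+j)))"
  using i j phi index_pair_lt[of _ dA i 2] index_pair_lt[of _ dA j 2] by (auto simp: ptrace_left_def proj_def intro!: sum.cong)

definition pop0 :: "nat \<Rightarrow> complex vec \<Rightarrow> real" where "pop0 dA phi = (\<Sum>a<dA. (cmod (phi $ (a*2)))^2)"

definition pop1 :: "nat \<Rightarrow> complex vec \<Rightarrow> real" where "pop1 dA phi = (\<Sum>a<dA. (cmod (phi $ (a*2+1)))^2)"

definition coh :: "nat \<Rightarrow> complex vec \<Rightarrow> complex" where "coh dA phi = (\<Sum>a<dA. phi $ (a*2) * cnj (phi $ (a*2+1)))"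

lemma mult_cnj_norm_sq: "z * cnj z = complex_of_real ((cmod z)^2)"
  by (metis of_real_power complex_norm_square)

lemma qubit_marginal_params:
  assumes phi: "dim_vec phi = dA * 2"
  shows "ptrace_left dA 2 (proj phi) $$ (0,0) = of_real (pop0 dA phi)"
    "ptrace_left dA 2 (proj phi) $$ (1,1) = of_real (pop1 dA phi)"
    "ptrace_left dA 2 (proj phi) $$ (0,1) = coh dA phi"
    "ptrace_left dA 2 (proj phi) $$ (1,0) = cnj (coh dA phi)"
  using phi by (simp_all add: qubit_marginal_entry pop0_def pop1_def coh_def mult_cnj_norm_sq of_real_sum cnj_sum mult.commute)

lemma pop_nonneg: "pop0 dA phi \<ge> 0" "pop1 dA phi \<ge> 0"
  by (simp_all add: pop0_def pop1_def sum_nonneg)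

lemma pop_sum:
  assumes phi: "dim_vec phi = dA * 2" and u: "is_unit_vector phi"
  shows "pop0 dA phi + pop1 dA phi = 1"
proof -
  have "1 = (\<Sum>k<dA*2. (cmod (phi $ k))^2)" using u phi unfolding is_unit_vector_def by simp
  also have "\<dots> = (\<Sum>a<dA. \<Sum>i<2. (cmod (phi $ (a*2+i)))^2)" by (rule sum_index_pair)
  also have "\<dots> = pop0 dA phi + pop1 dA phi" by (simp add: pop0_def pop1_def numeral_2_eq_2 sum.distrib)
  finally show ?thesis by simp
qed

text \<open>The Cauchy-Schwarz inequality, in the weighted complex form needed for the
  coherences (positivity of the qubit marginal, also for averaged marginals).\<close>

lemma cauchy_schwarz_real:
  fixes x y :: "'i \<Rightarrow> real" assumes S: "finite S"
  shows "(\<Sum>k\<in>S. x k * y k)^2 \<le> (\<Sum>k\<in>S. (x k)^2) * (\<Sum>k\<in>S. (y k)^2)"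
proof -
  have "0 \<le> (\<Sum>i\<in>S. \<Sum>j\<in>S. (x i * y j - x j * y i)^2)" by (intro sum_nonneg, simp)
  also have "\<dots> = (\<Sum>i\<in>S. \<Sum>j\<in>S. (x i)^2 * (y j)^2 + (x j)^2 * (y i)^2 - 2 * ((x i * y i) * (x j * y j)))"
    by (intro sum.cong refl, simp add: power2_eq_square algebra_simps)
  also have "\<dots> = 2 * ((\<Sum>k\<in>S. (x k)^2) * (\<Sum>k\<in>S. (y k)^2) - (\<Sum>k\<in>S. x k * y k)^2)"
  proof -
    have 1: "(\<Sum>i\<in>S. \<Sum>j\<in>S. (x i)^2 * (y j)^2) = (\<Sum>k\<in>S. (x k)^2) * (\<Sum>k\<in>S. (y k)^2)"
      by (simp add: sum_product)
    have 2: "(\<Sum>i\<in>S. \<Sum>j\<in>S. (x j)^2 * (y i)^2) = (\<Sum>k\<in>S. (x k)^2) * (\<Sum>k\<in>S. (y k)^2)"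
      unfolding 1[symmetric] by (rule sum.swap)
    have 3: "(\<Sum>i\<in>S. \<Sum>j\<in>S. 2 * ((x i * y i) * (x j * y j))) = 2 * (\<Sum>k\<in>S. x k * y k)^2"
      by (simp add: sum_product power2_eq_square sum_distrib_left sum_distrib_right algebra_simps)
    show ?thesis unfolding sum_subtractf sum.distrib 1 2 3 by simp
  qed
  finally show ?thesis by simp
qed

lemma cauchy_schwarz_weighted:
  fixes f g :: "'i \<Rightarrow> complex" and c :: "'i \<Rightarrow> real"
  assumes S: "finite S" and c: "\<And>k. k \<in> S \<Longrightarrow> c k \<ge> 0"
  shows "(cmod (\<Sum>k\<in>S. complex_of_real (c k) * (f k * cnj (g k))))^2
     \<le> (\<Sum>k\<in>S. c k * (cmod (f k))^2) * (\<Sum>k\<in>S. c k * (cmod (g k))^2)"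
proof -
  have "cmod (\<Sum>k\<in>S. complex_of_real (c k) * (f k * cnj (g k))) \<le> (\<Sum>k\<in>S. cmod (complex_of_real (c k) * (f k * cnj (g k))))"
    by (rule norm_sum)
  also have "\<dots> = (\<Sum>k\<in>S. (sqrt (c k) * cmod (f k)) * (sqrt (c k) * cmod (g k)))"
    using c by (intro sum.cong refl, simp add: norm_mult abs_of_nonneg real_sqrt_mult[symmetric])
  finally have le: "cmod (\<Sum>k\<in>S. complex_of_real (c k) * (f k * cnj (g k))) \<le> (\<Sum>k\<in>S. (sqrt (c k) * cmod (f k)) * (sqrt (c k) * cmod (g k)))" .
  have "(cmod (\<Sum>k\<in>S. complex_of_real (c k) * (f k * cnj (g k))))^2 \<le> (\<Sum>k\<in>S. (sqrt (c k) * cmod (f k)) * (sqrt (c k) * cmod (g k)))^2"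
    by (rule power_mono[OF le norm_ge_zero])
  also have "\<dots> \<le> (\<Sum>k\<in>S. (sqrt (c k) * cmod (f k))^2) * (\<Sum>k\<in>S. (sqrt (c k) * cmod (g k))^2)"
    by (rule cauchy_schwarz_real[OF S])
  also have "\<dots> = (\<Sum>k\<in>S. c k * (cmod (f k))^2) * (\<Sum>k\<in>S. c k * (cmod (g k))^2)"
    using c by (simp add: power_mult_distrib)
  finally show ?thesis .
qed

lemma coh_bound: "(cmod (coh dA phi))^2 \<le> pop0 dA phi * pop1 dA phi"
  using cauchy_schwarz_weighted[of "{..<dA}" "\<lambda>_. 1" "\<lambda>a. phi $ (a*2)" "\<lambda>a. phi $ (a*2+1)"]
  by (simp add: pop0_def pop1_def coh_def)

lemma avg_coh_bound:
  fixes p :: "nat \<Rightarrow> real" and phi :: "nat \<Rightarrow> complex vec"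
  assumes p0: "\<And>x. x < nX \<Longrightarrow> p x \<ge> 0"
  shows "(cmod (\<Sum>x<nX. complex_of_real (p x) * coh dA (phi x)))^2
     \<le> (\<Sum>x<nX. p x * pop0 dA (phi x)) * (\<Sum>x<nX. p x * pop1 dA (phi x))"
proof -
  let ?S = "{..<nX} \<times> {..<dA}"
  have e1: "(\<Sum>x<nX. complex_of_real (p x) * coh dA (phi x))
    = (\<Sum>(x,a)\<in>?S. complex_of_real (p x) * (phi x $ (a*2) * cnj (phi x $ (a*2+1))))"
    unfolding coh_def sum_distrib_left sum.cartesian_product ..
  have e2: "(\<Sum>x<nX. p x * pop0 dA (phi x)) = (\<Sum>(x,a)\<in>?S. p x * (cmod (phi x $ (a*2)))^2)"
    unfolding pop0_def sum_distrib_left sum.cartesian_product ..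
  have e3: "(\<Sum>x<nX. p x * pop1 dA (phi x)) = (\<Sum>(x,a)\<in>?S. p x * (cmod (phi x $ (a*2+1)))^2)"
    unfolding pop1_def sum_distrib_left sum.cartesian_product ..
  have "(cmod (\<Sum>k\<in>?S. complex_of_real (p (fst k)) * ((\<lambda>k. phi (fst k) $ (snd k*2)) k * cnj ((\<lambda>k. phi (fst k) $ (snd k*2+1)) k))))^2
    \<le> (\<Sum>k\<in>?S. p (fst k) * (cmod ((\<lambda>k. phi (fst k) $ (snd k*2)) k))^2) * (\<Sum>k\<in>?S. p (fst k) * (cmod ((\<lambda>k. phi (fst k) $ (snd k*2+1)) k))^2)"
    by (rule cauchy_schwarz_weighted, auto intro: p0)
  thus ?thesis unfolding e1 e2 e3 by (simp add: case_prod_beta)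
qed

text \<open>The Bloch length r of the qubit state [[a, c], [c*, b]]; its eigenvalues are
  (a + b \<plusminus> r)/2, and r \<le> 1 for a state (positivity is |c|^2 \<le> a b).\<close>

definition bloch_len :: "real \<Rightarrow> real \<Rightarrow> complex \<Rightarrow> real" where
  "bloch_len a b c = sqrt ((a - b)^2 + 4 * (cmod c)^2)"

lemma bloch_len_le_1:
  assumes "a \<ge> 0" "b \<ge> 0" "a + b = 1" "(cmod c)^2 \<le> a * b"
  shows "bloch_len a b c \<le> 1" "bloch_len a b c \<ge> 0"
proof -
  have "(a - b)^2 + 4 * (cmod c)^2 \<le> (a + b)^2" using assms(4) by (simp add: power2_eq_square algebra_simps)
  hence "(a - b)^2 + 4 * (cmod c)^2 \<le> 1" using assms(3) by simp
  thus "bloch_len a b c \<le> 1" unfolding bloch_len_def by simp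
  show "bloch_len a b c \<ge> 0" unfolding bloch_len_def by simp
qed

lemma bloch_len_range:
  assumes phi: "dim_vec phi = dA * 2" and u: "is_unit_vector phi"
  shows "0 \<le> bloch_len (pop0 dA phi) (pop1 dA phi) (coh dA phi)" "bloch_len (pop0 dA phi) (pop1 dA phi) (coh dA phi) \<le> 1"
  using bloch_len_le_1[OF pop_nonneg pop_sum[OF phi u] coh_bound] by auto


section \<open>Marginals of the cloning isometry\<close>

lemma Delta_pos: "N \<ge> 1 \<Longrightarrow> Delta N > 0" unfolding Delta_def by simp

definition clone_coeff :: "nat \<Rightarrow> nat \<Rightarrow> nat \<Rightarrow> nat \<Rightarrow> real" where
  "clone_coeff N b e i = (if i = 0 then (if b = e then sqrt ((real N - real e) / Delta N) else 0)
                 else (if b = Suc e then sqrt ((real e + 1) / Delta N) else 0))"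

lemma clone_iso_carrier: "clone_iso N \<in> carrier_mat ((N+1)*N) 2"
  by (simp add: clone_iso_def)

lemma clone_iso_entry:
  assumes b: "b < Suc N" and e: "e < N" and i: "i < 2"
  shows "clone_iso N $$ (b*N+e, i) = complex_of_real (clone_coeff N b e i)"
proof -
  have r: "b*N+e < (N+1)*N" using index_pair_lt[OF b e] by simp
  have "(b*N+e) div N = b" "(b*N+e) mod N = e" using e by simp_all
  thus ?thesis using r i e by (simp add: clone_iso_def clone_coeff_def of_nat_diff)
qed

lemma sqrt_div_prod: assumes "D > 0" "x \<ge> 0" "y \<ge> 0"
  shows "sqrt (x / D) * sqrt (y / D) = sqrt (x * y) / D"
  using assms by (simp add: real_sqrt_mult[symmetric] real_sqrt_divide)

lemma env_gram_00: assumes "e < N" "e' < N" "Delta N > 0"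
  shows "(\<Sum>b<Suc N. clone_coeff N b e 0 * clone_coeff N b e' 0) = (if e' = e then (real N - real e) / Delta N else 0)"
proof -
  have "(\<Sum>b<Suc N. clone_coeff N b e 0 * clone_coeff N b e' 0) = (\<Sum>b<Suc N. if b = e then (if e' = e then (real N - real e) / Delta N else 0) else 0)"
    using assms by (intro sum.cong refl, auto simp: clone_coeff_def)
  thus ?thesis using assms by simp
qed

lemma env_gram_11: assumes "e < N" "e' < N" "Delta N > 0"
  shows "(\<Sum>b<Suc N. clone_coeff N b e 1 * clone_coeff N b e' 1) = (if e' = e then (real e + 1) / Delta N else 0)"
proof -
  have "(\<Sum>b<Suc N. clone_coeff N b e 1 * clone_coeff N b e' 1) = (\<Sum>b<Suc N. if b = Suc e then (if e' = e then (real e + 1) / Delta N else 0) else 0)"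
    using assms by (intro sum.cong refl, auto simp: clone_coeff_def)
  thus ?thesis using assms by simp
qed

lemma env_gram_01: assumes "e < N" "e' < N" "Delta N > 0"
  shows "(\<Sum>b<Suc N. clone_coeff N b e 0 * clone_coeff N b e' 1) = (if e = Suc e' then sqrt ((real N - real e) * (real e' + 1)) / Delta N else 0)"
proof -
  have "(\<Sum>b<Suc N. clone_coeff N b e 0 * clone_coeff N b e' 1) = (\<Sum>b<Suc N. if b = e then (if e = Suc e' then sqrt ((real N - real e) * (real e' + 1)) / Delta N else 0) else 0)"
    using assms by (intro sum.cong refl, auto simp: clone_coeff_def sqrt_div_prod)
  thus ?thesis using assms by simp
qed

lemma env_gram_10: assumes "e < N" "e' < N" "Delta N > 0"
  shows "(\<Sum>b<Suc N. clone_coeff N b e 1 * clone_coeff N b e' 0) = (if e' = Suc e then sqrt ((real e + 1) * (real N - real e')) / Delta N else 0)"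
proof -
  have "(\<Sum>b<Suc N. clone_coeff N b e 1 * clone_coeff N b e' 0) = (\<Sum>b<Suc N. if b = e' then (if e' = Suc e then sqrt ((real e + 1) * (real N - real e')) / Delta N else 0) else 0)"
    using assms by (intro sum.cong refl, auto simp: clone_coeff_def sqrt_div_prod)
  thus ?thesis using assms by simp
qed

lemma out_gram_00: assumes "b < Suc N" "b' < Suc N" "Delta N > 0"
  shows "(\<Sum>e<N. clone_coeff N b e 0 * clone_coeff N b' e 0) = (if b' = b \<and> b < N then (real N - real b) / Delta N else 0)"
proof -
  have "(\<Sum>e<N. clone_coeff N b e 0 * clone_coeff N b' e 0) = (\<Sum>e<N. if e = b then (if b' = b then (real N - real b) / Delta N else 0) else 0)"
    using assms by (intro sum.cong refl, auto simp: clone_coeff_def)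
  thus ?thesis using assms by auto
qed

lemma out_gram_11: assumes "b < Suc N" "b' < Suc N" "Delta N > 0"
  shows "(\<Sum>e<N. clone_coeff N b e 1 * clone_coeff N b' e 1) = (if b' = b \<and> 0 < b then real b / Delta N else 0)"
proof -
  have "(\<Sum>e<N. clone_coeff N b e 1 * clone_coeff N b' e 1) = (\<Sum>e<N. if e = b - 1 then (if b' = b \<and> 0 < b then real b / Delta N else 0) else 0)"
    using assms by (intro sum.cong refl, auto simp: clone_coeff_def of_nat_diff)
  thus ?thesis using assms by auto
qed

lemma out_gram_01: assumes "b < Suc N" "b' < Suc N" "Delta N > 0"
  shows "(\<Sum>e<N. clone_coeff N b e 0 * clone_coeff N b' e 1) = (if b' = Suc b then sqrt ((real N - real b) * (real b + 1)) / Delta N else 0)"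
proof -
  have "(\<Sum>e<N. clone_coeff N b e 0 * clone_coeff N b' e 1) = (\<Sum>e<N. if e = b then (if b' = Suc b then sqrt ((real N - real b) * (real b + 1)) / Delta N else 0) else 0)"
    using assms by (intro sum.cong refl, auto simp: clone_coeff_def sqrt_div_prod)
  thus ?thesis using assms by auto
qed

lemma out_gram_10: assumes "b < Suc N" "b' < Suc N" "Delta N > 0"
  shows "(\<Sum>e<N. clone_coeff N b e 1 * clone_coeff N b' e 0) = (if b = Suc b' then sqrt ((real b' + 1) * (real N - real b')) / Delta N else 0)"
proof -
  have "(\<Sum>e<N. clone_coeff N b e 1 * clone_coeff N b' e 0) = (\<Sum>e<N. if e = b' then (if b = Suc b' then sqrt ((real b' + 1) * (real N - real b')) / Delta N else 0) else 0)"
    using assms by (intro sum.cong refl, auto simp: clone_coeff_def sqrt_div_prod)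
  thus ?thesis using assms by auto
qed

text \<open>Both are spin matrices: the N x N environment
  marginal has parameter n = N - 1, the (N + 1) x (N + 1) output marginal has n = N.\<close>

definition env_entry :: "nat \<Rightarrow> (nat \<Rightarrow> nat \<Rightarrow> complex) \<Rightarrow> nat \<Rightarrow> nat \<Rightarrow> complex" where
  "env_entry N R e e' = (\<Sum>b<Suc N. \<Sum>i<2. \<Sum>j<2. of_real (clone_coeff N b e i * clone_coeff N b e' j) * R i j)"

definition out_entry :: "nat \<Rightarrow> (nat \<Rightarrow> nat \<Rightarrow> complex) \<Rightarrow> nat \<Rightarrow> nat \<Rightarrow> complex" where
  "out_entry N R b b' = (\<Sum>e<N. \<Sum>i<2. \<Sum>j<2. of_real (clone_coeff N b e i * clone_coeff N b' e j) * R i j)"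

lemma env_entry_spin_mat:
  assumes N: "N \<ge> 1" and e: "e < N" and e': "e' < N" and D: "Delta N > 0"
  and R: "R 0 0 = of_real a" "R 1 1 = of_real b" "R 0 1 = c" "R 1 0 = cnj c"
  shows "env_entry N R e e' = spin_mat (N - 1) (1 / Delta N) (a + b) a b c $$ (e, e')"
proof -
  have "env_entry N R e e' = R 0 0 * of_real (\<Sum>b<Suc N. clone_coeff N b e 0 * clone_coeff N b e' 0)
     + R 0 1 * of_real (\<Sum>b<Suc N. clone_coeff N b e 0 * clone_coeff N b e' 1)
     + R 1 0 * of_real (\<Sum>b<Suc N. clone_coeff N b e 1 * clone_coeff N b e' 0)
     + R 1 1 * of_real (\<Sum>b<Suc N. clone_coeff N b e 1 * clone_coeff N b e' 1)"
    unfolding env_entry_def of_real_sum by (simp add: numeral_2_eq_2 sum.distrib sum_distrib_left algebra_simps)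
  also have "\<dots> = spin_mat (N - 1) (1 / Delta N) (a + b) a b c $$ (e, e')"
    unfolding env_gram_00[OF e e' D] env_gram_01[OF e e' D] env_gram_10[OF e e' D] env_gram_11[OF e e' D] R
    using e e' N D by (auto simp: spin_mat_def of_nat_diff field_simps)
  finally show ?thesis .
qed

lemma out_entry_spin_mat:
  assumes N: "N \<ge> 1" and bb: "b < Suc N" and bb': "b' < Suc N" and D: "Delta N > 0"
  and R: "R 0 0 = of_real a0" "R 1 1 = of_real b0" "R 0 1 = c" "R 1 0 = cnj c"
  shows "out_entry N R b b' = spin_mat N (1 / Delta N) 0 a0 b0 (cnj c) $$ (b, b')"
proof -
  have "out_entry N R b b' = R 0 0 * of_real (\<Sum>e<N. clone_coeff N b e 0 * clone_coeff N b' e 0)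
     + R 0 1 * of_real (\<Sum>e<N. clone_coeff N b e 0 * clone_coeff N b' e 1)
     + R 1 0 * of_real (\<Sum>e<N. clone_coeff N b e 1 * clone_coeff N b' e 0)
     + R 1 1 * of_real (\<Sum>e<N. clone_coeff N b e 1 * clone_coeff N b' e 1)"
    unfolding out_entry_def of_real_sum by (simp add: numeral_2_eq_2 sum.distrib sum_distrib_left algebra_simps)
  also have "\<dots> = spin_mat N (1 / Delta N) 0 a0 b0 (cnj c) $$ (b, b')"
    unfolding out_gram_00[OF bb bb' D] out_gram_01[OF bb bb' D] out_gram_10[OF bb bb' D] out_gram_11[OF bb bb' D] R
    using bb bb' N D by (auto simp: spin_mat_def of_nat_diff field_simps)
  finally show ?thesis .
qed

lemma out_entry_linear:
  fixes p :: "nat \<Rightarrow> real" and R :: "nat \<Rightarrow> nat \<Rightarrow> nat \<Rightarrow> complex" and n :: nat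
  shows "(\<Sum>x<n. complex_of_real (p x) * out_entry N (R x) i j) = out_entry N (\<lambda>k l. \<Sum>x<n. complex_of_real (p x) * R x k l) i j"
  unfolding out_entry_def sum_distrib_left by (simp add: sum.swap[of _ "{..<n}"] algebra_simps)

lemma sum_of_nat_real: "(\<Sum>e<N. real e) = real N * (real N - 1) / 2"
  by (induct N, auto simp: field_simps)

lemma sum_env_weights_0: "(\<Sum>e<N. real N - real e) = Delta N"
  unfolding Delta_def sum_subtractf sum_of_nat_real by (simp add: field_simps)

lemma sum_env_weights_1: "(\<Sum>e<N. real e + 1) = Delta N"
  unfolding Delta_def by (induct N, auto simp: field_simps)

lemma clone_coeff_isometry:
  assumes N: "N \<ge> 1" and i: "i < 2" and j: "j < 2"
  shows "(\<Sum>b<Suc N. \<Sum>e<N. clone_coeff N b e i * clone_coeff N b e j) = (if i = j then 1 else 0)"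
proof -
  have D: "Delta N > 0" using Delta_pos[OF N] .
  have sw: "(\<Sum>b<Suc N. \<Sum>e<N. clone_coeff N b e i * clone_coeff N b e j) = (\<Sum>e<N. \<Sum>b<Suc N. clone_coeff N b e i * clone_coeff N b e j)"
    by (rule sum.swap)
  have "i = 0 \<or> i = 1" "j = 0 \<or> j = 1" using i j by auto
  moreover have "(\<Sum>e<N. \<Sum>b<Suc N. clone_coeff N b e 0 * clone_coeff N b e 0) = 1"
  proof -
    have "(\<Sum>e<N. \<Sum>b<Suc N. clone_coeff N b e 0 * clone_coeff N b e 0) = (\<Sum>e<N. (real N - real e) / Delta N)"
      by (rule sum.cong[OF refl], subst env_gram_00, insert D, auto)
    thus ?thesis using D by (simp add: sum_divide_distrib[symmetric] sum_env_weights_0)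
  qed
  moreover have "(\<Sum>e<N. \<Sum>b<Suc N. clone_coeff N b e 1 * clone_coeff N b e 1) = 1"
  proof -
    have "(\<Sum>e<N. \<Sum>b<Suc N. clone_coeff N b e 1 * clone_coeff N b e 1) = (\<Sum>e<N. (real e + 1) / Delta N)"
      by (rule sum.cong[OF refl], subst env_gram_11, insert D, auto)
    thus ?thesis using D by (simp add: sum_divide_distrib[symmetric] sum_env_weights_1)
  qed
  moreover have "(\<Sum>e<N. \<Sum>b<Suc N. clone_coeff N b e 0 * clone_coeff N b e 1) = 0"
    by (rule sum.neutral, rule ballI, subst env_gram_01, insert D, auto)
  moreover have "(\<Sum>e<N. \<Sum>b<Suc N. clone_coeff N b e 1 * clone_coeff N b e 0) = 0"
    by (rule sum.neutral, rule ballI, subst env_gram_10, insert D, auto)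
  ultimately show ?thesis unfolding sw by auto
qed

definition clone_out :: "nat \<Rightarrow> nat \<Rightarrow> complex vec \<Rightarrow> complex vec" where
  "clone_out N dA phi = kron (1\<^sub>m dA) (clone_iso N) *\<^sub>v phi"

lemma clone_out_dim[simp]: "dim_vec (clone_out N dA phi) = dA * ((N+1)*N)"
  by (simp add: clone_out_def kron_def clone_iso_def)

lemma clone_out_entry:
  assumes phi: "dim_vec phi = dA * 2" and a: "a < dA" and b: "b < Suc N" and e: "e < N"
  shows "clone_out N dA phi $ (a*((N+1)*N) + (b*N+e)) = (\<Sum>i<2. complex_of_real (clone_coeff N b e i) * phi $ (a*2+i))"
proof -
  have r: "b*N+e < (N+1)*N" using index_pair_lt[OF b e] by simp
  have "clone_out N dA phi $ (a*((N+1)*N) + (b*N+e)) = (\<Sum>i<2. clone_iso N $$ (b*N+e,i) * phi $ (a*2+i))"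
    unfolding clone_out_def by (rule kron1_mult_vec[OF clone_iso_carrier phi a r])
  also have "\<dots> = (\<Sum>i<2. complex_of_real (clone_coeff N b e i) * phi $ (a*2+i))"
    using b e by (intro sum.cong refl, simp add: clone_iso_entry)
  finally show ?thesis .
qed

lemma clone_out_gram:
  assumes phi: "dim_vec phi = dA * 2" and b: "b < Suc N" and e: "e < N" and b': "b' < Suc N" and e': "e' < N"
  shows "(\<Sum>a<dA. clone_out N dA phi $ (a*((N+1)*N) + (b*N+e)) * cnj (clone_out N dA phi $ (a*((N+1)*N) + (b'*N+e'))))
    = (\<Sum>i<2. \<Sum>j<2. complex_of_real (clone_coeff N b e i * clone_coeff N b' e' j) * ptrace_left dA 2 (proj phi) $$ (i,j))"
proof -
  have "(\<Sum>a<dA. clone_out N dA phi $ (a*((N+1)*N) + (b*N+e)) * cnj (clone_out N dA phi $ (a*((N+1)*N) + (b'*N+e'))))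
    = (\<Sum>a<dA. (\<Sum>i<2. complex_of_real (clone_coeff N b e i) * phi $ (a*2+i)) * cnj (\<Sum>j<2. complex_of_real (clone_coeff N b' e' j) * phi $ (a*2+j)))"
  proof (intro sum.cong refl)
    fix a assume "a \<in> {..<dA}" hence a: "a < dA" by simp
    show "clone_out N dA phi $ (a*((N+1)*N) + (b*N+e)) * cnj (clone_out N dA phi $ (a*((N+1)*N) + (b'*N+e')))
     = (\<Sum>i<2. complex_of_real (clone_coeff N b e i) * phi $ (a*2+i)) * cnj (\<Sum>j<2. complex_of_real (clone_coeff N b' e' j) * phi $ (a*2+j))"
      by (simp only: clone_out_entry[OF phi a b e] clone_out_entry[OF phi a b' e'])
  qed
  also have "\<dots> = (\<Sum>a<dA. \<Sum>i<2. \<Sum>j<2. complex_of_real (clone_coeff N b e i * clone_coeff N b' e' j) * (phi $ (a*2+i) * cnj (phi $ (a*2+j))))"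
    by (simp add: sum_product cnj_sum algebra_simps)
  also have "\<dots> = (\<Sum>i<2. \<Sum>j<2. complex_of_real (clone_coeff N b e i * clone_coeff N b' e' j) * (\<Sum>a<dA. phi $ (a*2+i) * cnj (phi $ (a*2+j))))"
    by (simp add: sum_distrib_left sum.swap[of _ "{..<dA}"])
  also have "\<dots> = (\<Sum>i<2. \<Sum>j<2. complex_of_real (clone_coeff N b e i * clone_coeff N b' e' j) * ptrace_left dA 2 (proj phi) $$ (i,j))"
    using phi by (intro sum.cong refl, simp add: qubit_marginal_entry)
  finally show ?thesis .
qed

lemma env_marginal:
  assumes phi: "dim_vec phi = dA * 2"
  shows "ptrace_left (dA*(N+1)) N (proj (clone_out N dA phi)) = mat N N (\<lambda>(e,e'). env_entry N (\<lambda>i j. ptrace_left dA 2 (proj phi) $$ (i,j)) e e')"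
proof (rule eq_matI)
  fix e e' assume "e < dim_row (mat N N (\<lambda>(e,e'). env_entry N (\<lambda>i j. ptrace_left dA 2 (proj phi) $$ (i,j)) e e'))"
    "e' < dim_col (mat N N (\<lambda>(e,e'). env_entry N (\<lambda>i j. ptrace_left dA 2 (proj phi) $$ (i,j)) e e'))"
  hence e: "e < N" and e': "e' < N" by auto
  let ?w = "clone_out N dA phi"
  have kb: "k*N+e < dim_vec ?w" "k*N+e' < dim_vec ?w" if "k < dA*(N+1)" for k
    using index_pair_lt[OF that e] index_pair_lt[OF that e'] unfolding clone_out_dim by (simp_all only: mult.assoc)
  have "ptrace_left (dA*(N+1)) N (proj ?w) $$ (e,e') = (\<Sum>k<dA*(N+1). proj ?w $$ (k*N+e, k*N+e'))"
    using e e' by (simp add: ptrace_left_def)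
  also have "\<dots> = (\<Sum>k<dA*(N+1). ?w $ (k*N+e) * cnj (?w $ (k*N+e')))"
    by (intro sum.cong refl proj_index kb, simp_all)
  also have "\<dots> = (\<Sum>a<dA. \<Sum>b<N+1. ?w $ ((a*(N+1)+b)*N+e) * cnj (?w $ ((a*(N+1)+b)*N+e')))"
    by (rule sum_index_pair)
  also have "\<dots> = (\<Sum>b<N+1. \<Sum>a<dA. ?w $ (a*((N+1)*N) + (b*N+e)) * cnj (?w $ (a*((N+1)*N) + (b*N+e'))))"
    unfolding index_regroup by (rule sum.swap)
  also have "\<dots> = (\<Sum>b<N+1. \<Sum>i<2. \<Sum>j<2. complex_of_real (clone_coeff N b e i * clone_coeff N b e' j) * ptrace_left dA 2 (proj phi) $$ (i,j))"
    by (rule sum.cong[OF refl], rule clone_out_gram[OF phi], auto simp: e e')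
  also have "\<dots> = env_entry N (\<lambda>i j. ptrace_left dA 2 (proj phi) $$ (i,j)) e e'"
    unfolding env_entry_def by simp
  finally show "ptrace_left (dA*(N+1)) N (proj ?w) $$ (e,e') = mat N N (\<lambda>(e,e'). env_entry N (\<lambda>i j. ptrace_left dA 2 (proj phi) $$ (i,j)) e e') $$ (e,e')"
    using e e' by simp
qed (auto simp: ptrace_left_def)

lemma out_marginal:
  assumes phi: "dim_vec phi = dA * 2"
  shows "ptrace_left dA (N+1) (ptrace_right (dA*(N+1)) N (proj (clone_out N dA phi)))
     = mat (N+1) (N+1) (\<lambda>(b,b'). out_entry N (\<lambda>i j. ptrace_left dA 2 (proj phi) $$ (i,j)) b b')"
proof (rule eq_matI)
  fix b b' assume "b < dim_row (mat (N+1) (N+1) (\<lambda>(b,b'). out_entry N (\<lambda>i j. ptrace_left dA 2 (proj phi) $$ (i,j)) b b'))"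
    "b' < dim_col (mat (N+1) (N+1) (\<lambda>(b,b'). out_entry N (\<lambda>i j. ptrace_left dA 2 (proj phi) $$ (i,j)) b b'))"
  hence b: "b < Suc N" and b': "b' < Suc N" by auto
  let ?w = "clone_out N dA phi"
  have "ptrace_left dA (N+1) (ptrace_right (dA*(N+1)) N (proj ?w)) $$ (b,b')
      = (\<Sum>a<dA. \<Sum>e<N. ?w $ ((a*(N+1)+b)*N+e) * cnj (?w $ ((a*(N+1)+b')*N+e)))"
  proof -
    have A: "a*(N+1)+b < dA*(N+1)" "a*(N+1)+b' < dA*(N+1)" if "a < dA" for a
      using index_pair_lt[OF that b] index_pair_lt[OF that b'] by auto
    have B: "(a*(N+1)+b)*N+e < dim_vec ?w" "(a*(N+1)+b')*N+e < dim_vec ?w" if "a < dA" "e < N" for a e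
      using index_pair_lt[OF A(1)[OF that(1)] that(2)] index_pair_lt[OF A(2)[OF that(1)] that(2)] unfolding clone_out_dim
      by (simp_all only: mult.assoc)
    have "ptrace_left dA (N+1) (ptrace_right (dA*(N+1)) N (proj ?w)) $$ (b,b')
       = (\<Sum>a<dA. ptrace_right (dA*(N+1)) N (proj ?w) $$ (a*(N+1)+b, a*(N+1)+b'))"
      using b b' by (simp add: ptrace_left_def)
    also have "\<dots> = (\<Sum>a<dA. \<Sum>e<N. proj ?w $$ ((a*(N+1)+b)*N+e, (a*(N+1)+b')*N+e))"
      using A by (intro sum.cong refl, simp add: ptrace_right_def)
    also have "\<dots> = (\<Sum>a<dA. \<Sum>e<N. ?w $ ((a*(N+1)+b)*N+e) * cnj (?w $ ((a*(N+1)+b')*N+e)))"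
      by (intro sum.cong refl proj_index B, simp_all)
    finally show ?thesis .
  qed
  also have "\<dots> = (\<Sum>e<N. \<Sum>a<dA. ?w $ (a*((N+1)*N) + (b*N+e)) * cnj (?w $ (a*((N+1)*N) + (b'*N+e))))"
    unfolding index_regroup by (rule sum.swap)
  also have "\<dots> = (\<Sum>e<N. \<Sum>i<2. \<Sum>j<2. complex_of_real (clone_coeff N b e i * clone_coeff N b' e j) * ptrace_left dA 2 (proj phi) $$ (i,j))"
    by (rule sum.cong[OF refl], rule clone_out_gram[OF phi b _ b'], auto)
  also have "\<dots> = out_entry N (\<lambda>i j. ptrace_left dA 2 (proj phi) $$ (i,j)) b b'"
    unfolding out_entry_def by simp
  finally show "ptrace_left dA (N+1) (ptrace_right (dA*(N+1)) N (proj ?w)) $$ (b,b')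
     = mat (N+1) (N+1) (\<lambda>(b,b'). out_entry N (\<lambda>i j. ptrace_left dA 2 (proj phi) $$ (i,j)) b b') $$ (b,b')"
    using b b' by simp
qed (auto simp: ptrace_left_def)

lemma sum_swap4: "(\<Sum>a\<in>A. \<Sum>b\<in>B. \<Sum>c\<in>C. \<Sum>d\<in>D. f a b c d) = (\<Sum>c\<in>C. \<Sum>d\<in>D. \<Sum>a\<in>A. \<Sum>b\<in>B. (f a b c d :: 'z :: comm_monoid_add))"
proof -
  have "(\<Sum>a\<in>A. \<Sum>b\<in>B. \<Sum>c\<in>C. \<Sum>d\<in>D. f a b c d) = (\<Sum>a\<in>A. \<Sum>c\<in>C. \<Sum>b\<in>B. \<Sum>d\<in>D. f a b c d)"
    by (rule sum.cong[OF refl], rule sum.swap)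
  also have "\<dots> = (\<Sum>c\<in>C. \<Sum>a\<in>A. \<Sum>b\<in>B. \<Sum>d\<in>D. f a b c d)" by (rule sum.swap)
  also have "\<dots> = (\<Sum>c\<in>C. \<Sum>a\<in>A. \<Sum>d\<in>D. \<Sum>b\<in>B. f a b c d)"
    by (rule sum.cong[OF refl], rule sum.cong[OF refl], rule sum.swap)
  also have "\<dots> = (\<Sum>c\<in>C. \<Sum>d\<in>D. \<Sum>a\<in>A. \<Sum>b\<in>B. f a b c d)"
    by (rule sum.cong[OF refl], rule sum.swap)
  finally show ?thesis .
qed

text \<open>Since U is an isometry, the reference marginal is unchanged: Tr_BE = Tr_A'.\<close>

lemma ref_marginal:
  assumes N: "N \<ge> 1" and phi: "dim_vec phi = dA * 2"
  shows "ptrace_right dA ((N+1)*N) (proj (clone_out N dA phi)) = ptrace_right dA 2 (proj phi)"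
proof (rule eq_matI)
  fix a a' assume "a < dim_row (ptrace_right dA 2 (proj phi))" "a' < dim_col (ptrace_right dA 2 (proj phi))"
  hence a: "a < dA" and a': "a' < dA" by (auto simp: ptrace_right_def)
  let ?w = "clone_out N dA phi"
  let ?M = "(N+1)*N"
  have kb: "a*?M+r < dim_vec ?w" "a'*?M+r < dim_vec ?w" if "r < ?M" for r
    using index_pair_lt[OF a that] index_pair_lt[OF a' that] by simp_all
  have "ptrace_right dA ?M (proj ?w) $$ (a,a') = (\<Sum>r<?M. proj ?w $$ (a*?M+r, a'*?M+r))"
    using a a' by (simp add: ptrace_right_def)
  also have "\<dots> = (\<Sum>r<?M. ?w $ (a*?M+r) * cnj (?w $ (a'*?M+r)))"
    by (intro sum.cong refl proj_index kb, simp_all)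
  also have "\<dots> = (\<Sum>b<N+1. \<Sum>e<N. ?w $ (a*?M+(b*N+e)) * cnj (?w $ (a'*?M+(b*N+e))))"
    by (rule sum_index_pair)
  also have "\<dots> = (\<Sum>b<N+1. \<Sum>e<N. (\<Sum>i<2. complex_of_real (clone_coeff N b e i) * phi $ (a*2+i)) * cnj (\<Sum>j<2. complex_of_real (clone_coeff N b e j) * phi $ (a'*2+j)))"
  proof (intro sum.cong refl)
    fix b e assume "b \<in> {..<N+1}" "e \<in> {..<N}"
    hence b: "b < Suc N" and e: "e < N" by auto
    show "?w $ (a*?M+(b*N+e)) * cnj (?w $ (a'*?M+(b*N+e))) = (\<Sum>i<2. complex_of_real (clone_coeff N b e i) * phi $ (a*2+i)) * cnj (\<Sum>j<2. complex_of_real (clone_coeff N b e j) * phi $ (a'*2+j))"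
      by (simp only: clone_out_entry[OF phi a b e] clone_out_entry[OF phi a' b e])
  qed
  also have "\<dots> = (\<Sum>b<N+1. \<Sum>e<N. \<Sum>i<2. \<Sum>j<2. complex_of_real (clone_coeff N b e i * clone_coeff N b e j) * (phi $ (a*2+i) * cnj (phi $ (a'*2+j))))"
    by (simp add: sum_product cnj_sum algebra_simps)
  also have "\<dots> = (\<Sum>i<2. \<Sum>j<2. complex_of_real (\<Sum>b<N+1. \<Sum>e<N. clone_coeff N b e i * clone_coeff N b e j) * (phi $ (a*2+i) * cnj (phi $ (a'*2+j))))"
    unfolding of_real_sum sum_distrib_right by (rule sum_swap4)
  also have "\<dots> = (\<Sum>i<2. \<Sum>j<2. (if i = j then 1 else 0) * (phi $ (a*2+i) * cnj (phi $ (a'*2+j))))"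
  proof (intro sum.cong refl)
    fix i j assume "i \<in> {..<2::nat}" "j \<in> {..<2::nat}"
    hence i: "i < 2" and j: "j < 2" by auto
    have "(\<Sum>b<N+1. \<Sum>e<N. clone_coeff N b e i * clone_coeff N b e j) = (if i = j then 1 else 0)" using clone_coeff_isometry[OF N i j] by simp
    thus "complex_of_real (\<Sum>b<N+1. \<Sum>e<N. clone_coeff N b e i * clone_coeff N b e j) * (phi $ (a*2+i) * cnj (phi $ (a'*2+j)))
      = (if i = j then 1 else 0) * (phi $ (a*2+i) * cnj (phi $ (a'*2+j)))" by simp
  qed
  also have "\<dots> = (\<Sum>i<2. phi $ (a*2+i) * cnj (phi $ (a'*2+i)))"
    by (simp add: if_distrib[of "\<lambda>x. x * _"] sum.delta cong: if_cong)
  also have "\<dots> = ptrace_right dA 2 (proj phi) $$ (a,a')"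
    using a a' phi index_pair_lt[OF a, of _ 2] index_pair_lt[OF a', of _ 2] by (auto simp: ptrace_right_def proj_def intro!: sum.cong)
  finally show "ptrace_right dA ?M (proj ?w) $$ (a,a') = ptrace_right dA 2 (proj phi) $$ (a,a')" .
qed (auto simp: ptrace_right_def)

lemma clone_out_trace:
  assumes N: "N \<ge> 1" and phi: "dim_vec phi = dA * 2" and u: "is_unit_vector phi"
  shows "ptrace_right 1 (dA*((N+1)*N)) (proj (clone_out N dA phi)) = mat 1 1 (\<lambda>_. 1)"
proof (rule eq_matI)
  fix i j assume "i < dim_row (mat 1 1 (\<lambda>_. 1 :: complex))" "j < dim_col (mat 1 1 (\<lambda>_. 1 :: complex))"
  hence i: "i = 0" "j = 0" by auto
  let ?w = "clone_out N dA phi"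
  let ?M = "(N+1)*N"
  have "ptrace_right 1 (dA*?M) (proj ?w) $$ (0,0) = (\<Sum>k<dA*?M. proj ?w $$ (k,k))"
    by (simp add: ptrace_right_def)
  also have "\<dots> = (\<Sum>a<dA. \<Sum>r<?M. proj ?w $$ (a*?M+r, a*?M+r))" by (rule sum_index_pair)
  also have "\<dots> = (\<Sum>a<dA. ptrace_right dA ?M (proj ?w) $$ (a,a))"
    by (intro sum.cong refl, simp add: ptrace_right_def)
  also have "\<dots> = (\<Sum>a<dA. ptrace_right dA 2 (proj phi) $$ (a,a))" unfolding ref_marginal[OF N phi] ..
  also have "\<dots> = (\<Sum>a<dA. \<Sum>r<2. proj phi $$ (a*2+r, a*2+r))"
    by (intro sum.cong refl, simp add: ptrace_right_def)
  also have "\<dots> = (\<Sum>k<dA*2. proj phi $$ (k,k))" by (rule sum_index_pair[symmetric])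
  also have "\<dots> = (\<Sum>k<dA*2. complex_of_real ((cmod (phi $ k))^2))"
    using phi by (intro sum.cong refl, simp add: proj_def, metis of_real_power complex_norm_square)
  also have "\<dots> = complex_of_real (\<Sum>k<dA*2. (cmod (phi $ k))^2)" by (simp only: of_real_sum)
  also have "\<dots> = 1" using u phi unfolding is_unit_vector_def by simp
  finally show "ptrace_right 1 (dA*((N+1)*N)) (proj ?w) $$ (i,j) = mat 1 1 (\<lambda>_. 1) $$ (i,j)" using i by simp
qed (auto simp: ptrace_right_def)


section \<open>The objective in closed form\<close>

lemma adm_state_blockdiag:
  assumes phi: "\<And>x. x < nX \<Longrightarrow> dim_vec (phi x) = dA * 2"
  shows "adm_state_m N nX p dA phi = blockdiag nX (dA*((N+1)*N)) (\<lambda>x. complex_of_real (p x) \<cdot>\<^sub>m proj (clone_out N dA (phi x)))"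
proof -
  let ?V = "kron (1\<^sub>m dA) (clone_iso N)"
  let ?D = "dA*((N+1)*N)"
  have V: "?V \<in> carrier_mat ?D (dA*2)" by (simp add: kron_def clone_iso_def)
  have W: "x < nX \<Longrightarrow> ?V * proj (phi x) * adj ?V = proj (clone_out N dA (phi x))" for x
    unfolding clone_out_def by (rule proj_conj[OF V phi])
  show ?thesis
  proof (rule eq_matI)
    fix i j assume "i < dim_row (blockdiag nX ?D (\<lambda>x. complex_of_real (p x) \<cdot>\<^sub>m proj (clone_out N dA (phi x))))"
      "j < dim_col (blockdiag nX ?D (\<lambda>x. complex_of_real (p x) \<cdot>\<^sub>m proj (clone_out N dA (phi x))))"
    hence i: "i < nX * ?D" and j: "j < nX * ?D" by (auto simp: blockdiag_def)
    have Dp: "?D > 0" using i by (cases "?D = 0") auto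
    have id: "i div ?D < nX" "j div ?D < nX" using div_lt_of_lt_mult i j by auto
    have im: "i mod ?D < ?D" "j mod ?D < ?D" using Dp by auto
    have "adm_state_m N nX p dA phi $$ (i,j) = (\<Sum>x<nX. complex_of_real (p x) * (kron (ketbra nX x) (proj (clone_out N dA (phi x)))) $$ (i,j))"
      using i j by (simp add: adm_state_m_def Let_def W)
    also have "\<dots> = (\<Sum>x<nX. complex_of_real (p x) * ((if i div ?D = x \<and> j div ?D = x then 1 else 0) * proj (clone_out N dA (phi x)) $$ (i mod ?D, j mod ?D)))"
      using i j id by (intro sum.cong refl, subst kron_index, auto simp: ketbra_def proj_def)
    also have "\<dots> = blockdiag nX ?D (\<lambda>x. complex_of_real (p x) \<cdot>\<^sub>m proj (clone_out N dA (phi x))) $$ (i,j)"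
    proof (cases "i div ?D = j div ?D")
      case True
      have "(\<Sum>x<nX. complex_of_real (p x) * ((if i div ?D = x \<and> j div ?D = x then 1 else 0) * proj (clone_out N dA (phi x)) $$ (i mod ?D, j mod ?D)))
        = (\<Sum>x<nX. if x = i div ?D then complex_of_real (p x) * proj (clone_out N dA (phi x)) $$ (i mod ?D, j mod ?D) else 0)"
        using True by (intro sum.cong refl, auto)
      also have "\<dots> = complex_of_real (p (i div ?D)) * proj (clone_out N dA (phi (i div ?D))) $$ (i mod ?D, j mod ?D)"
        using id by simp
      finally show ?thesis using True i j im by (simp add: blockdiag_def proj_def)
    next
      case False
      have "(\<Sum>x<nX. complex_of_real (p x) * ((if i div ?D = x \<and> j div ?D = x then 1 else 0) * proj (clone_out N dA (phi x)) $$ (i mod ?D, j mod ?D))) = 0"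
        using False by (intro sum.neutral ballI, auto)
      thus ?thesis using False i j by (simp add: blockdiag_def)
    qed
    finally show "adm_state_m N nX p dA phi $$ (i,j) = blockdiag nX ?D (\<lambda>x. complex_of_real (p x) \<cdot>\<^sub>m proj (clone_out N dA (phi x))) $$ (i,j)" .
  qed (auto simp: adm_state_m_def Let_def kron_def ketbra_def clone_iso_def blockdiag_def)
qed

lemma adm_state_marginal_XAB:
  assumes dA: "dA \<ge> 1" and dims: "\<forall>x<nX. dim_vec (phi x) = dA * 2"
  shows "ptrace_right (nX * dA * (N + 1)) N (adm_state_m N nX p dA phi)
     = blockdiag nX (dA*(N+1)) (\<lambda>x. complex_of_real (p x) \<cdot>\<^sub>m ptrace_right (dA*(N+1)) N (proj (clone_out N dA (phi x))))"
proof -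
  define F where "F = (\<lambda>x. complex_of_real (p x) \<cdot>\<^sub>m proj (clone_out N dA (phi x)))"
  have rho: "adm_state_m N nX p dA phi = blockdiag nX (dA*((N+1)*N)) F"
    unfolding F_def by (rule adm_state_blockdiag) (use dims in auto)
  have "ptrace_right (nX * dA * (N + 1)) N (adm_state_m N nX p dA phi)
      = ptrace_right (nX * (dA * (N + 1))) N (blockdiag nX ((dA*(N+1))*N) F)"
    unfolding rho by (simp only: mult.assoc)
  also have "\<dots> = blockdiag nX (dA*(N+1)) (\<lambda>x. ptrace_right (dA*(N+1)) N (F x))"
    by (rule ptrace_right_blockdiag, use dA in simp)
  also have "\<dots> = blockdiag nX (dA*(N+1)) (\<lambda>x. complex_of_real (p x) \<cdot>\<^sub>m ptrace_right (dA*(N+1)) N (proj (clone_out N dA (phi x))))"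
    unfolding F_def by (rule blockdiag_cong, rule ptrace_right_smult, simp add: proj_def algebra_simps)
  finally show ?thesis .
qed

lemma adm_state_marginal_XA:
  assumes dA: "dA \<ge> 1" and dims: "\<forall>x<nX. dim_vec (phi x) = dA * 2"
  shows "ptrace_right (nX * dA) ((N + 1) * N) (adm_state_m N nX p dA phi)
     = blockdiag nX dA (\<lambda>x. complex_of_real (p x) \<cdot>\<^sub>m ptrace_right dA ((N+1)*N) (proj (clone_out N dA (phi x))))"
proof -
  define F where "F = (\<lambda>x. complex_of_real (p x) \<cdot>\<^sub>m proj (clone_out N dA (phi x)))"
  have rho: "adm_state_m N nX p dA phi = blockdiag nX (dA*((N+1)*N)) F"
    unfolding F_def by (rule adm_state_blockdiag) (use dims in auto)
  have "ptrace_right (nX * dA) ((N + 1) * N) (adm_state_m N nX p dA phi)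
      = blockdiag nX dA (\<lambda>x. ptrace_right dA ((N+1)*N) (F x))"
    unfolding rho by (rule ptrace_right_blockdiag, use dA in simp)
  also have "\<dots> = blockdiag nX dA (\<lambda>x. complex_of_real (p x) \<cdot>\<^sub>m ptrace_right dA ((N+1)*N) (proj (clone_out N dA (phi x))))"
    unfolding F_def by (rule blockdiag_cong, rule ptrace_right_smult, simp add: proj_def)
  finally show ?thesis .
qed

lemma adm_state_marginal_X:
  assumes dims: "\<forall>x<nX. dim_vec (phi x) = dA * 2"
  shows "ptrace_right nX (dA * ((N + 1) * N)) (adm_state_m N nX p dA phi)
     = blockdiag nX 1 (\<lambda>x. complex_of_real (p x) \<cdot>\<^sub>m ptrace_right 1 (dA*((N+1)*N)) (proj (clone_out N dA (phi x))))"
proof -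
  define F where "F = (\<lambda>x. complex_of_real (p x) \<cdot>\<^sub>m proj (clone_out N dA (phi x)))"
  have rho: "adm_state_m N nX p dA phi = blockdiag nX (dA*((N+1)*N)) F"
    unfolding F_def by (rule adm_state_blockdiag) (use dims in auto)
  have "ptrace_right nX (dA * ((N + 1) * N)) (adm_state_m N nX p dA phi)
      = ptrace_right (nX * 1) (dA * ((N + 1) * N)) (blockdiag nX (1 * (dA*((N+1)*N))) F)"
    unfolding rho by simp
  also have "\<dots> = blockdiag nX 1 (\<lambda>x. ptrace_right 1 (dA*((N+1)*N)) (F x))"
    by (rule ptrace_right_blockdiag, simp)
  also have "\<dots> = blockdiag nX 1 (\<lambda>x. complex_of_real (p x) \<cdot>\<^sub>m ptrace_right 1 (dA*((N+1)*N)) (proj (clone_out N dA (phi x))))"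
    unfolding F_def by (rule blockdiag_cong, rule ptrace_right_smult, simp add: proj_def)
  finally show ?thesis .
qed

lemma adm_state_marginal_B:
  assumes dA: "dA \<ge> 1" and dims: "\<forall>x<nX. dim_vec (phi x) = dA * 2"
  shows "ptrace_left (nX * dA) (N + 1) (ptrace_right (nX * dA * (N + 1)) N (adm_state_m N nX p dA phi))
     = mat (N+1) (N+1) (\<lambda>(i,j). out_entry N
         (\<lambda>k l. \<Sum>x<nX. complex_of_real (p x) * ptrace_left dA 2 (proj (phi x)) $$ (k, l)) i j)"
proof -
  have block: "ptrace_left dA (N+1) (complex_of_real (p x) \<cdot>\<^sub>m ptrace_right (dA*(N+1)) N (proj (clone_out N dA (phi x)))) $$ (i,j)
      = complex_of_real (p x) * out_entry N (\<lambda>k l. ptrace_left dA 2 (proj (phi x)) $$ (k, l)) i j"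
    if x: "x < nX" and i: "i < N+1" "j < N+1" for x i j
  proof -
    have "ptrace_left dA (N+1) (complex_of_real (p x) \<cdot>\<^sub>m ptrace_right (dA*(N+1)) N (proj (clone_out N dA (phi x))))
      = complex_of_real (p x) \<cdot>\<^sub>m ptrace_left dA (N+1) (ptrace_right (dA*(N+1)) N (proj (clone_out N dA (phi x))))"
      by (rule ptrace_left_smult, simp add: ptrace_right_def)
    thus ?thesis unfolding out_marginal[OF dims[rule_format, OF x]] using i by simp
  qed
  have "ptrace_left (nX * dA) (N + 1) (ptrace_right (nX * dA * (N + 1)) N (adm_state_m N nX p dA phi))
     = mat (N+1) (N+1) (\<lambda>(i,j). \<Sum>x<nX. ptrace_left dA (N+1) (complex_of_real (p x) \<cdot>\<^sub>m
          ptrace_right (dA*(N+1)) N (proj (clone_out N dA (phi x)))) $$ (i,j))"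
    unfolding adm_state_marginal_XAB[OF dA dims] by (rule ptrace_left_blockdiag, use dA in simp)
  also have "\<dots> = mat (N+1) (N+1) (\<lambda>(i,j). \<Sum>x<nX. complex_of_real (p x) *
          out_entry N (\<lambda>k l. ptrace_left dA 2 (proj (phi x)) $$ (k, l)) i j)"
    using block by (intro eq_matI) auto
  finally show ?thesis unfolding out_entry_linear .
qed

definition eig_hi :: "real \<Rightarrow> real" where "eig_hi r = (1 + r) / 2"

definition eig_lo :: "real \<Rightarrow> real" where "eig_lo r = (1 - r) / 2"

definition H_qubit :: "real \<Rightarrow> real" where "H_qubit r = eta (eig_hi r) + eta (eig_lo r)"

definition H_env :: "nat \<Rightarrow> real \<Rightarrow> real" where
  "H_env N r = (\<Sum>j<N. eta ((1 + real j * eig_hi r + real (N - 1 - j) * eig_lo r) / Delta N))"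

definition H_out :: "nat \<Rightarrow> real \<Rightarrow> real" where
  "H_out N r = (\<Sum>j<Suc N. eta ((real j * eig_hi r + real (N - j) * eig_lo r) / Delta N))"

lemma env_eig_sum: assumes "l1 + l2 = 1"
  shows "(\<Sum>j<N. 1 + real j * l1 + real (N - 1 - j) * l2) = Delta N"
proof -
  have r: "(\<Sum>j<N. real (N - 1 - j)) = (\<Sum>j<N. real j)"
  proof (rule sum.reindex_bij_witness[of _ "\<lambda>j. N - 1 - j" "\<lambda>j. N - 1 - j"])
  qed auto
  have "(\<Sum>j<N. 1 + real j * l1 + real (N - 1 - j) * l2) = real N + l1 * (\<Sum>j<N. real j) + l2 * (\<Sum>j<N. real (N - 1 - j))"
    unfolding sum.distrib sum_distrib_right[symmetric] by simp
  also have "\<dots> = real N + (l1 + l2) * (\<Sum>j<N. real j)" unfolding r by (simp add: algebra_simps)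
  also have "\<dots> = real N + (\<Sum>j<N. real j)" using assms by simp
  also have "\<dots> = Delta N" unfolding sum_of_nat_real Delta_def by (simp add: field_simps)
  finally show ?thesis .
qed

lemma qubit_marginal_spin_mat:
  assumes phi: "dim_vec phi = dA * 2"
  shows "complex_of_real p \<cdot>\<^sub>m ptrace_left dA 2 (proj phi) = spin_mat 1 p 0 (pop0 dA phi) (pop1 dA phi) (cnj (coh dA phi))"
proof (rule eq_matI)
  fix i j assume "i < dim_row (spin_mat 1 p 0 (pop0 dA phi) (pop1 dA phi) (cnj (coh dA phi)))"
    "j < dim_col (spin_mat 1 p 0 (pop0 dA phi) (pop1 dA phi) (cnj (coh dA phi)))"
  hence "i = 0 \<or> i = 1" "j = 0 \<or> j = 1" by (auto simp: spin_mat_def)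
  thus "(complex_of_real p \<cdot>\<^sub>m ptrace_left dA 2 (proj phi)) $$ (i,j) = spin_mat 1 p 0 (pop0 dA phi) (pop1 dA phi) (cnj (coh dA phi)) $$ (i,j)"
    using qubit_marginal_params[OF phi] by (auto simp: spin_mat_def ptrace_left_def[of dA 2 "proj phi"])
qed (auto simp: spin_mat_def ptrace_left_def)

text \<open>Entropies of the individual blocks of the marginals on XA, XAB (via Schmidt symmetry
  with the environment) and X, and of the output marginal.\<close>

lemma entropy_block_XA:
  assumes N: "N \<ge> 1" and phi: "dim_vec phi = dA * 2" and u: "is_unit_vector phi" and p: "p \<ge> 0"
  shows "vn_entropy (complex_of_real p \<cdot>\<^sub>m ptrace_right dA ((N+1)*N) (proj (clone_out N dA phi)))
    = p * H_qubit (bloch_len (pop0 dA phi) (pop1 dA phi) (coh dA phi)) + eta p"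
proof -
  define a where "a = pop0 dA phi"
  define b where "b = pop1 dA phi"
  define c where "c = coh dA phi"
  define r where "r = bloch_len a b c"
  have ab: "a + b = 1" unfolding a_def b_def by (rule pop_sum[OF phi u])
  have r01: "r \<le> 1" "r \<ge> 0" unfolding r_def using bloch_len_le_1[OF _ _ ab] pop_nonneg coh_bound unfolding a_def b_def c_def by auto
  have "vn_entropy (complex_of_real p \<cdot>\<^sub>m ptrace_right dA ((N+1)*N) (proj (clone_out N dA phi)))
     = vn_entropy (complex_of_real p \<cdot>\<^sub>m ptrace_right dA 2 (proj phi))" by (simp only: ref_marginal[OF N phi])
  also have "\<dots> = vn_entropy (complex_of_real p \<cdot>\<^sub>m ptrace_left dA 2 (proj phi))"
    by (rule vn_entropy_swap_scaled[OF phi p])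
  also have "\<dots> = vn_entropy (spin_mat 1 p 0 a b (cnj c))" unfolding qubit_marginal_spin_mat[OF phi] a_def b_def c_def ..
  also have "\<dots> = eta (p * eig_lo r) + eta (p * eig_hi r)"
    unfolding vn_entropy_spin_mat using ab by (simp add: numeral_2_eq_2 eig_hi_def eig_lo_def r_def bloch_len_def)
  also have "\<dots> = p * H_qubit r + eta p"
  proof -
    have l: "eig_hi r \<ge> 0" "eig_lo r \<ge> 0" "eig_hi r + eig_lo r = 1" using r01 by (auto simp: eig_hi_def eig_lo_def field_simps)
    have "eta (p * eig_lo r) + eta (p * eig_hi r) = (p * eta (eig_lo r) + eig_lo r * eta p) + (p * eta (eig_hi r) + eig_hi r * eta p)"
      using eta_mult[OF p l(1)] eta_mult[OF p l(2)] by simp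
    also have "\<dots> = p * H_qubit r + (eig_hi r + eig_lo r) * eta p" by (simp add: H_qubit_def algebra_simps)
    finally show ?thesis using l(3) by simp
  qed
  finally show ?thesis unfolding r_def a_def b_def c_def .
qed

lemma env_marginal_spin_mat:
  assumes N: "N \<ge> 1" and phi: "dim_vec phi = dA * 2" and u: "is_unit_vector phi"
  shows "complex_of_real p \<cdot>\<^sub>m ptrace_left (dA*(N+1)) N (proj (clone_out N dA phi))
       = spin_mat (N - 1) (p / Delta N) 1 (pop0 dA phi) (pop1 dA phi) (coh dA phi)"
proof (rule eq_matI)
  fix i j assume "i < dim_row (spin_mat (N - 1) (p / Delta N) 1 (pop0 dA phi) (pop1 dA phi) (coh dA phi))"
    "j < dim_col (spin_mat (N - 1) (p / Delta N) 1 (pop0 dA phi) (pop1 dA phi) (coh dA phi))"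
  hence i: "i < N" "j < N" using N by (auto simp: spin_mat_def)
  have "(complex_of_real p \<cdot>\<^sub>m ptrace_left (dA*(N+1)) N (proj (clone_out N dA phi))) $$ (i,j)
     = complex_of_real p * env_entry N (\<lambda>i j. ptrace_left dA 2 (proj phi) $$ (i,j)) i j"
    unfolding env_marginal[OF phi] using i by simp
  also have "\<dots> = complex_of_real p * spin_mat (N - 1) (1 / Delta N) (pop0 dA phi + pop1 dA phi)
      (pop0 dA phi) (pop1 dA phi) (coh dA phi) $$ (i,j)"
    using env_entry_spin_mat[OF N i Delta_pos[OF N] qubit_marginal_params[OF phi]] by simp
  also have "\<dots> = spin_mat (N - 1) (p / Delta N) 1 (pop0 dA phi) (pop1 dA phi) (coh dA phi) $$ (i,j)"
    using i N pop_sum[OF phi u] by (simp add: spin_mat_def)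
  finally show "(complex_of_real p \<cdot>\<^sub>m ptrace_left (dA*(N+1)) N (proj (clone_out N dA phi))) $$ (i,j)
      = spin_mat (N - 1) (p / Delta N) 1 (pop0 dA phi) (pop1 dA phi) (coh dA phi) $$ (i,j)" .
qed (insert N, auto simp: spin_mat_def ptrace_left_def)

lemma entropy_block_XAB:
  assumes N: "N \<ge> 1" and phi: "dim_vec phi = dA * 2" and u: "is_unit_vector phi" and p: "p \<ge> 0"
  shows "vn_entropy (complex_of_real p \<cdot>\<^sub>m ptrace_right (dA*(N+1)) N (proj (clone_out N dA phi)))
    = p * H_env N (bloch_len (pop0 dA phi) (pop1 dA phi) (coh dA phi)) + eta p"
proof -
  define r where "r = bloch_len (pop0 dA phi) (pop1 dA phi) (coh dA phi)"
  have D: "Delta N > 0" using Delta_pos[OF N] .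
  have l: "eig_hi r \<ge> 0" "eig_lo r \<ge> 0" "eig_hi r + eig_lo r = 1"
    using bloch_len_range[OF phi u] by (auto simp: r_def eig_hi_def eig_lo_def field_simps)
  define w where "w = (\<lambda>j. (1 + real j * eig_hi r + real (N - 1 - j) * eig_lo r) / Delta N)"
  have dimw: "dim_vec (clone_out N dA phi) = dA*(N+1)*N" by (simp add: algebra_simps)
  have "vn_entropy (complex_of_real p \<cdot>\<^sub>m ptrace_right (dA*(N+1)) N (proj (clone_out N dA phi)))
     = vn_entropy (complex_of_real p \<cdot>\<^sub>m ptrace_left (dA*(N+1)) N (proj (clone_out N dA phi)))"
    by (rule vn_entropy_swap_scaled[OF dimw p])
  also have "\<dots> = (\<Sum>j<N. eta (p * w j))"
    unfolding env_marginal_spin_mat[OF N phi u] vn_entropy_spin_mat using pop_sum[OF phi u] N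
    by (simp add: w_def eig_hi_def eig_lo_def r_def bloch_len_def)
  also have "\<dots> = (\<Sum>j<N. p * eta (w j) + w j * eta p)"
    using l D p by (intro sum.cong refl eta_mult, auto simp: w_def)
  also have "\<dots> = p * H_env N r + (\<Sum>j<N. w j) * eta p"
    by (simp add: sum.distrib H_env_def w_def sum_distrib_left sum_distrib_right)
  also have "(\<Sum>j<N. w j) = 1"
    using env_eig_sum[OF l(3)] D unfolding w_def sum_divide_distrib[symmetric] by simp
  finally show ?thesis unfolding r_def by simp
qed

lemma entropy_block_X:
  assumes N: "N \<ge> 1" and phi: "dim_vec phi = dA * 2" and u: "is_unit_vector phi"
  shows "vn_entropy (complex_of_real p \<cdot>\<^sub>m ptrace_right 1 (dA*((N+1)*N)) (proj (clone_out N dA phi))) = eta p"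
proof -
  have "complex_of_real p \<cdot>\<^sub>m ptrace_right 1 (dA*((N+1)*N)) (proj (clone_out N dA phi)) = spin_mat 0 p 1 0 0 0"
    unfolding clone_out_trace[OF N phi u] by (auto simp: spin_mat_def intro!: eq_matI)
  moreover have "vn_entropy (spin_mat 0 p 1 0 0 0) = eta p" unfolding vn_entropy_spin_mat by simp
  ultimately show ?thesis by simp
qed

lemma entropy_out_marginal:
  assumes N: "N \<ge> 1" and R: "R 0 0 = of_real a" "R 1 1 = of_real b" "R 0 1 = c" "R 1 0 = cnj c"
  and ab: "a + b = 1"
  shows "vn_entropy (mat (N+1) (N+1) (\<lambda>(i,j). out_entry N R i j)) = H_out N (bloch_len a b c)"
proof -
  have D: "Delta N > 0" using Delta_pos[OF N] .
  have "mat (N+1) (N+1) (\<lambda>(i,j). out_entry N R i j) = spin_mat N (1 / Delta N) 0 a b (cnj c)"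
  proof (rule eq_matI)
    fix i j assume "i < dim_row (spin_mat N (1 / Delta N) 0 a b (cnj c))" "j < dim_col (spin_mat N (1 / Delta N) 0 a b (cnj c))"
    hence i: "i < Suc N" "j < Suc N" by (auto simp: spin_mat_def)
    show "mat (N+1) (N+1) (\<lambda>(i,j). out_entry N R i j) $$ (i,j) = spin_mat N (1 / Delta N) 0 a b (cnj c) $$ (i,j)"
      using out_entry_spin_mat[OF N i D R] i by simp
  qed (auto simp: spin_mat_def)
  moreover have "vn_entropy (spin_mat N (1 / Delta N) 0 a b (cnj c)) = H_out N (bloch_len a b c)"
    unfolding vn_entropy_spin_mat H_out_def using ab by (simp add: eig_hi_def eig_lo_def bloch_len_def)
  ultimately show ?thesis by simp
qed

lemma objective_formula:
  assumes N: "N \<ge> 1" and adm: "admissible_ensemble nX p dA phi"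
  shows "ce_objective N lam nX p dA phi =
     (1 - lam) * (\<Sum>x<nX. p x * H_qubit (bloch_len (pop0 dA (phi x)) (pop1 dA (phi x)) (coh dA (phi x))))
     + H_out N (bloch_len (\<Sum>x<nX. p x * pop0 dA (phi x)) (\<Sum>x<nX. p x * pop1 dA (phi x))
         (\<Sum>x<nX. complex_of_real (p x) * coh dA (phi x)))
     - (\<Sum>x<nX. p x * H_env N (bloch_len (pop0 dA (phi x)) (pop1 dA (phi x)) (coh dA (phi x))))"
proof -
  from adm have dA: "dA \<ge> 1" and p0: "\<And>x. x < nX \<Longrightarrow> p x \<ge> 0" and ps: "(\<Sum>x<nX. p x) = 1"
    and dims: "\<And>x. x < nX \<Longrightarrow> dim_vec (phi x) = dA * 2" and uv: "\<And>x. x < nX \<Longrightarrow> is_unit_vector (phi x)"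
    unfolding admissible_ensemble_def by auto
  have dims_all: "\<forall>x<nX. dim_vec (phi x) = dA * 2" using dims by blast
  define rx where "rx = (\<lambda>x. bloch_len (pop0 dA (phi x)) (pop1 dA (phi x)) (coh dA (phi x)))"
  have HXAB: "vn_entropy (ptrace_right (nX * dA * (N + 1)) N (adm_state_m N nX p dA phi))
      = (\<Sum>x<nX. p x * H_env N (rx x) + eta (p x))"
    unfolding adm_state_marginal_XAB[OF dA dims_all] rx_def
    by (subst vn_entropy_blockdiag, simp add: ptrace_right_def,
      rule sum.cong[OF refl], rule entropy_block_XAB[OF N dims uv p0], auto)
  have HXA: "vn_entropy (ptrace_right (nX * dA) ((N + 1) * N) (adm_state_m N nX p dA phi))
      = (\<Sum>x<nX. p x * H_qubit (rx x) + eta (p x))"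
    unfolding adm_state_marginal_XA[OF dA dims_all] rx_def
    by (subst vn_entropy_blockdiag, simp add: ptrace_right_def,
      rule sum.cong[OF refl], rule entropy_block_XA[OF N dims uv p0], auto)
  have HX: "vn_entropy (ptrace_right nX (dA * ((N + 1) * N)) (adm_state_m N nX p dA phi)) = (\<Sum>x<nX. eta (p x))"
    unfolding adm_state_marginal_X[OF dims_all]
    by (subst vn_entropy_blockdiag, simp add: ptrace_right_def,
      rule sum.cong[OF refl], rule entropy_block_X[OF N dims uv], auto)
  define Rb where "Rb = (\<lambda>k l. \<Sum>x<nX. complex_of_real (p x) * ptrace_left dA 2 (proj (phi x)) $$ (k, l))"
  have R: "Rb 0 0 = of_real (\<Sum>x<nX. p x * pop0 dA (phi x))" "Rb 1 1 = of_real (\<Sum>x<nX. p x * pop1 dA (phi x))"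
    "Rb 0 1 = (\<Sum>x<nX. complex_of_real (p x) * coh dA (phi x))"
    "Rb 1 0 = cnj (\<Sum>x<nX. complex_of_real (p x) * coh dA (phi x))"
    unfolding Rb_def using qubit_marginal_params[OF dims] by (auto simp: of_real_sum cnj_sum intro!: sum.cong)
  have ab: "(\<Sum>x<nX. p x * pop0 dA (phi x)) + (\<Sum>x<nX. p x * pop1 dA (phi x)) = 1"
    using pop_sum[OF dims uv] ps by (simp add: sum.distrib[symmetric] distrib_left[symmetric])
  have HB: "vn_entropy (ptrace_left (nX * dA) (N + 1) (ptrace_right (nX * dA * (N + 1)) N (adm_state_m N nX p dA phi)))
     = H_out N (bloch_len (\<Sum>x<nX. p x * pop0 dA (phi x)) (\<Sum>x<nX. p x * pop1 dA (phi x))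
         (\<Sum>x<nX. complex_of_real (p x) * coh dA (phi x)))"
    unfolding adm_state_marginal_B[OF dA dims_all] Rb_def[symmetric] by (rule entropy_out_marginal[OF N R ab])
  show ?thesis
    unfolding ce_objective_def Let_def HXAB HXA HX HB
    by (simp add: sum.distrib algebra_simps rx_def)
qed


section \<open>Optimisation\<close>

lemma out_eig_sum: assumes "l1 + l2 = 1" shows "(\<Sum>j<Suc N. real j * l1 + real (N - j) * l2) = Delta N"
proof -
  have r: "(\<Sum>j<Suc N. real (N - j)) = (\<Sum>j<Suc N. real j)"
    by (rule sum.reindex_bij_witness[of _ "\<lambda>j. N - j" "\<lambda>j. N - j"]) auto
  have g: "(\<Sum>j<Suc N. real j) = Delta N" using sum_of_nat_real[of "Suc N"] by (simp add: Delta_def field_simps)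
  have "(\<Sum>j<Suc N. real j * l1 + real (N - j) * l2) = l1 * (\<Sum>j<Suc N. real j) + l2 * (\<Sum>j<Suc N. real (N - j))"
    unfolding sum.distrib sum_distrib_right[symmetric] by (simp only: mult.commute)
  also have "\<dots> = (l1 + l2) * Delta N" unfolding r g by (simp add: algebra_simps)
  finally show ?thesis using assms by simp
qed

lemma H_out_le_log:
  assumes N: "N \<ge> 1" and r: "0 \<le> r" "r \<le> 1"
  shows "H_out N r \<le> log 2 (real N + 1)"
proof -
  have D: "Delta N > 0" using Delta_pos[OF N] .
  have l: "eig_hi r \<ge> 0" "eig_lo r \<ge> 0" "eig_hi r + eig_lo r = 1" using r by (auto simp: eig_hi_def eig_lo_def field_simps)
  have "H_out N r \<le> log 2 (real (card {..<Suc N}))" unfolding H_out_def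
  proof (rule entropy_le_log_card)
    show "(\<Sum>j<Suc N. (real j * eig_hi r + real (N - j) * eig_lo r) / Delta N) = 1"
      unfolding sum_divide_distrib[symmetric] out_eig_sum[OF l(3)] using D by simp
  qed (use l D in auto)
  thus ?thesis by (simp add: add.commute)
qed

lemma H_out_0:
  assumes N: "N \<ge> 1"
  shows "H_out N 0 = log 2 (real N + 1)"
proof -
  have D: "Delta N > 0" using Delta_pos[OF N] .
  have v: "(real j * eig_hi 0 + real (N - j) * eig_lo 0) / Delta N = 1 / (real N + 1)" if "j < Suc N" for j
  proof -
    have "real N + real N * real N > 0" using N by (simp add: add_pos_nonneg)
    thus ?thesis using that N by (simp add: eig_hi_def eig_lo_def Delta_def of_nat_diff field_simps)
  qed
  have "H_out N 0 = (\<Sum>j<Suc N. eta (1 / (real N + 1)))" unfolding H_out_def using v by simp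
  also have "\<dots> = (real N + 1) * eta (1 / (real N + 1))" by simp
  also have "\<dots> = log 2 (real N + 1)" by (simp add: eta_def log_divide)
  finally show ?thesis .
qed

definition ce_gain :: "nat \<Rightarrow> real \<Rightarrow> real \<Rightarrow> real" where
  "ce_gain N lam r = (1 - lam) * H_qubit r - H_env N r"

lemma env_eig_range:
  assumes N: "N \<ge> 1" and j: "j < N" and r: "0 \<le> r" "r \<le> 1"
  shows "(1 + real j * eig_hi r + real (N - 1 - j) * eig_lo r) / Delta N \<in> {0..1}"
proof -
  have D: "Delta N \<ge> real N"
  proof -
    have "real N * 2 \<le> real N * (real N + 1)" using N by (intro mult_left_mono) auto
    thus ?thesis unfolding Delta_def by simp
  qed
  have l: "0 \<le> eig_hi r" "eig_hi r \<le> 1" "0 \<le> eig_lo r" "eig_lo r \<le> 1" using r by (auto simp: eig_hi_def eig_lo_def)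
  have a: "real j * eig_hi r \<le> real j" using l by (simp add: mult_left_le)
  have b: "real (N - 1 - j) * eig_lo r \<le> real (N - 1 - j)" using l by (simp add: mult_left_le)
  have c: "real j + real (N - 1 - j) = real N - 1" using j by (simp add: of_nat_diff)
  have num: "1 + real j * eig_hi r + real (N - 1 - j) * eig_lo r \<le> Delta N" using a b c D by linarith
  have nn: "0 \<le> 1 + real j * eig_hi r + real (N - 1 - j) * eig_lo r" using l by simp
  show ?thesis using num nn Delta_pos[OF N] by (auto simp: divide_le_eq_1)
qed

lemma ce_gain_cont: assumes N: "N \<ge> 1" shows "continuous_on {0..1} (ce_gain N lam)"
proof -
  have c1: "continuous_on {0..1} (\<lambda>r. eta (eig_hi r))"
    by (rule continuous_on_compose2[OF eta_cont], unfold eig_hi_def, auto intro!: continuous_intros)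
  have c2: "continuous_on {0..1} (\<lambda>r. eta (eig_lo r))"
    by (rule continuous_on_compose2[OF eta_cont], unfold eig_lo_def, auto intro!: continuous_intros)
  have c3: "continuous_on {0..1} (\<lambda>r. eta ((1 + real j * eig_hi r + real (N - 1 - j) * eig_lo r) / Delta N))"
    if j: "j < N" for j
  proof (rule continuous_on_compose2[OF eta_cont])
    show "continuous_on {0..1::real} (\<lambda>r. (1 + real j * eig_hi r + real (N - 1 - j) * eig_lo r) / Delta N)"
      unfolding eig_hi_def eig_lo_def using Delta_pos[OF N] by (auto intro!: continuous_intros)
    show "(\<lambda>r. (1 + real j * eig_hi r + real (N - 1 - j) * eig_lo r) / Delta N) ` {0..1} \<subseteq> {0..1}"
      using env_eig_range[OF N j] by auto
  qed
  show ?thesis unfolding ce_gain_def H_qubit_def H_env_def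
    by (intro continuous_intros c1 c2 continuous_on_sum, use c3 in auto)
qed

lemma ce_gain_max: assumes N: "N \<ge> 1"
  obtains rs where "0 \<le> rs" "rs \<le> 1" "\<And>r. 0 \<le> r \<Longrightarrow> r \<le> 1 \<Longrightarrow> ce_gain N lam r \<le> ce_gain N lam rs"
proof -
  have "\<exists>x\<in>{0..1}. \<forall>y\<in>{0..1}. ce_gain N lam y \<le> ce_gain N lam x"
    by (rule continuous_attains_sup[OF compact_Icc _ ce_gain_cont[OF N]], simp)
  thus ?thesis using that by auto
qed

lemma ce_objective_le:
  assumes N: "N \<ge> 1" and adm: "admissible_ensemble nX p dA phi"
  and rs: "\<And>r. 0 \<le> r \<Longrightarrow> r \<le> 1 \<Longrightarrow> ce_gain N lam r \<le> ce_gain N lam rs"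
  shows "ce_objective N lam nX p dA phi \<le> log 2 (real N + 1) + ce_gain N lam rs"
proof -
  from adm have p0: "\<And>x. x < nX \<Longrightarrow> p x \<ge> 0" and ps: "(\<Sum>x<nX. p x) = 1"
    and dims: "\<And>x. x < nX \<Longrightarrow> dim_vec (phi x) = dA * 2" and uv: "\<And>x. x < nX \<Longrightarrow> is_unit_vector (phi x)"
    unfolding admissible_ensemble_def by auto
  define r where "r = (\<lambda>x. bloch_len (pop0 dA (phi x)) (pop1 dA (phi x)) (coh dA (phi x)))"
  define A where "A = (\<Sum>x<nX. p x * pop0 dA (phi x))"
  define B where "B = (\<Sum>x<nX. p x * pop1 dA (phi x))"
  define C where "C = (\<Sum>x<nX. complex_of_real (p x) * coh dA (phi x))"
  have A0: "A \<ge> 0" unfolding A_def using p0 pop_nonneg by (intro sum_nonneg) auto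
  have B0: "B \<ge> 0" unfolding B_def using p0 pop_nonneg by (intro sum_nonneg) auto
  have AB: "A + B = 1"
  proof -
    have "A + B = (\<Sum>x<nX. p x * (pop0 dA (phi x) + pop1 dA (phi x)))" unfolding A_def B_def
      by (simp add: sum.distrib algebra_simps)
    also have "\<dots> = (\<Sum>x<nX. p x)" using pop_sum[OF dims uv] by simp
    finally show ?thesis using ps by simp
  qed
  have Cb: "(cmod C)^2 \<le> A * B" unfolding A_def B_def C_def by (rule avg_coh_bound[OF p0])
  have rb01: "0 \<le> bloch_len A B C" "bloch_len A B C \<le> 1" using bloch_len_le_1[OF A0 B0 AB Cb] by auto
  have "ce_objective N lam nX p dA phi = H_out N (bloch_len A B C) + (\<Sum>x<nX. p x * ce_gain N lam (r x))"
    unfolding objective_formula[OF N adm] A_def[symmetric] B_def[symmetric] C_def[symmetric]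
    by (simp add: ce_gain_def sum_distrib_left sum_subtractf algebra_simps r_def sum.distrib)
  also have "\<dots> \<le> log 2 (real N + 1) + (\<Sum>x<nX. p x * ce_gain N lam rs)"
  proof (rule add_mono)
    show "H_out N (bloch_len A B C) \<le> log 2 (real N + 1)" using H_out_le_log[OF N rb01] .
    show "(\<Sum>x<nX. p x * ce_gain N lam (r x)) \<le> (\<Sum>x<nX. p x * ce_gain N lam rs)"
      using p0 rs bloch_len_range[OF dims uv] unfolding r_def by (intro sum_mono mult_left_mono) auto
  qed
  also have "(\<Sum>x<nX. p x * ce_gain N lam rs) = ce_gain N lam rs" using ps by (simp add: sum_distrib_right[symmetric])
  finally show ?thesis .
qed

lemma bloch_len_equal: "bloch_len a a 0 = 0" by (simp add: bloch_len_def)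

lemma diag2_entries:
  "diag2 a b $$ (0,0) = of_real a" "diag2 a b $$ (1,1) = of_real b" "diag2 a b $$ (0,1) = 0"
  by (simp_all add: diag2_def)

lemma flagged_ensemble_admissible:
  assumes d0: "dim_vec psi0 = dA * 2" and d1: "dim_vec psi1 = dA * 2"
    and u0: "is_unit_vector psi0" and u1: "is_unit_vector psi1"
  shows "admissible_ensemble 2 (\<lambda>x. 1/2) dA (\<lambda>x. if x = 0 then psi0 else psi1)"
proof -
  have "dA \<noteq> 0"
  proof
    assume "dA = 0"
    thus False using u0 d0 unfolding is_unit_vector_def by simp
  qed
  thus ?thesis unfolding admissible_ensemble_def using d0 d1 u0 u1 by (auto simp: numeral_2_eq_2)
qed

text \<open>The flagged diagonal ensemble with parameter mu has average Bloch length 0 and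
  individual Bloch lengths 1 - 2 mu.\<close>

lemma ce_objective_flagged:
  assumes N: "N \<ge> 1" and mu: "0 \<le> mu" "mu \<le> 1/2"
  and d0: "dim_vec psi0 = dA * 2" and d1: "dim_vec psi1 = dA * 2"
  and r0: "ptrace_left dA 2 (proj psi0) = diag2 mu (1 - mu)"
  and r1: "ptrace_left dA 2 (proj psi1) = diag2 (1 - mu) mu"
  and adm: "admissible_ensemble 2 (\<lambda>x. 1/2) dA (\<lambda>x. if x = 0 then psi0 else psi1)"
  shows "ce_objective N lam 2 (\<lambda>x. 1/2) dA (\<lambda>x. if x = 0 then psi0 else psi1) = log 2 (real N + 1) + ce_gain N lam (1 - 2*mu)"
proof -
  have a0: "pop0 dA psi0 = mu" using qubit_marginal_params(1)[OF d0] unfolding r0 diag2_entries of_real_eq_iff by simp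
  have b0: "pop1 dA psi0 = 1 - mu" using qubit_marginal_params(2)[OF d0] unfolding r0 diag2_entries of_real_eq_iff by simp
  have c0: "coh dA psi0 = 0" using qubit_marginal_params(3)[OF d0] unfolding r0 diag2_entries of_real_eq_iff by simp
  have a1: "pop0 dA psi1 = 1 - mu" using qubit_marginal_params(1)[OF d1] unfolding r1 diag2_entries of_real_eq_iff by simp
  have b1: "pop1 dA psi1 = mu" using qubit_marginal_params(2)[OF d1] unfolding r1 diag2_entries of_real_eq_iff by simp
  have c1: "coh dA psi1 = 0" using qubit_marginal_params(3)[OF d1] unfolding r1 diag2_entries of_real_eq_iff by simp
  have e0: "bloch_len mu (1 - mu) 0 = 1 - 2*mu"
  proof -
    have "(mu - (1 - mu))^2 = (1 - 2*mu)^2" by (simp add: power2_eq_square algebra_simps)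
    thus ?thesis unfolding bloch_len_def using mu by simp
  qed
  have e1: "bloch_len (1 - mu) mu 0 = 1 - 2*mu"
  proof -
    have "(1 - mu - mu)^2 = (1 - 2*mu)^2" by (simp add: power2_eq_square algebra_simps)
    thus ?thesis unfolding bloch_len_def using mu by simp
  qed
  have e2: "bloch_len (1/2 * mu + 1/2 * (1 - mu)) (1/2 * (1 - mu) + 1/2 * mu) 0 = 0"
    unfolding bloch_len_def by (simp add: algebra_simps)
  show ?thesis unfolding objective_formula[OF N adm]
    using H_out_0[OF N] by (simp add: numeral_2_eq_2 a0 b0 c0 a1 b1 c1 e0 e1 bloch_len_equal ce_gain_def algebra_simps)
qed

lemma g_lambda_attained:
  assumes le: "\<And>nX p dA phi. admissible_ensemble nX p dA phi \<Longrightarrow> ce_objective N lam nX p dA phi \<le> v"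
    and adm: "admissible_ensemble nX0 p0 dA0 phi0" and val: "ce_objective N lam nX0 p0 dA0 phi0 = v"
  shows "g_lambda N lam = v"
  unfolding g_lambda_def
proof (rule cSup_eq_maximum)
  show "v \<in> {ce_objective N lam nX p dA \<phi> |nX p dA \<phi>. admissible_ensemble nX p dA \<phi>}"
    using adm val by blast
qed (use le in blast)

theorem mainTheorem18:
  fixes N :: nat and lam :: real
  assumes "N \<ge> 1" and "0 \<le> lam" and "lam \<le> 1"
  shows "\<exists>\<mu>::real. 0 \<le> \<mu> \<and> \<mu> \<le> 1/2 \<and>
    (\<forall>(dA::nat) (\<psi>0::complex vec) (\<psi>1::complex vec).
       dim_vec \<psi>0 = dA * 2 \<and> dim_vec \<psi>1 = dA * 2 \<and> is_unit_vector \<psi>0 \<and> is_unit_vector \<psi>1 \<and>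
       ptrace_left dA 2 (proj \<psi>0) = diag2 \<mu> (1 - \<mu>) \<and>
       ptrace_left dA 2 (proj \<psi>1) = diag2 (1 - \<mu>) \<mu> \<longrightarrow>
       ce_objective N lam 2 (\<lambda>x. 1/2) dA (\<lambda>x. if x = 0 then \<psi>0 else \<psi>1) = g_lambda N lam)"
proof -
  have N: "N \<ge> 1" using assms(1) .
  obtain rs where rs: "0 \<le> rs" "rs \<le> 1"
    and rsmax: "\<And>r. 0 \<le> r \<Longrightarrow> r \<le> 1 \<Longrightarrow> ce_gain N lam r \<le> ce_gain N lam rs"
    using ce_gain_max[OF N] by blast
  define mu where "mu = (1 - rs) / 2"
  have mu: "0 \<le> mu" "mu \<le> 1/2" "1 - 2*mu = rs" using rs unfolding mu_def by (auto simp: field_simps)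
  have "ce_objective N lam 2 (\<lambda>x. 1/2) dA (\<lambda>x. if x = 0 then psi0 else psi1) = g_lambda N lam"
    if d: "dim_vec psi0 = dA * 2" "dim_vec psi1 = dA * 2" and u: "is_unit_vector psi0" "is_unit_vector psi1"
      and r: "ptrace_left dA 2 (proj psi0) = diag2 mu (1 - mu)" "ptrace_left dA 2 (proj psi1) = diag2 (1 - mu) mu"
    for dA psi0 psi1
  proof -
    have adm: "admissible_ensemble 2 (\<lambda>x. 1/2) dA (\<lambda>x. if x = 0 then psi0 else psi1)"
      by (rule flagged_ensemble_admissible[OF d u])
    have val: "ce_objective N lam 2 (\<lambda>x. 1/2) dA (\<lambda>x. if x = 0 then psi0 else psi1)
        = log 2 (real N + 1) + ce_gain N lam rs"
      using ce_objective_flagged[OF N mu(1,2) d r adm] mu(3) by simp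
    show ?thesis using g_lambda_attained[OF ce_objective_le[OF N _ rsmax] adm val] val by simp
  qed
  thus ?thesis using mu(1,2) by blast
qed

end
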